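(* Let $n\geq 2$. Every h-sphere $S^{2n}(z_0;a,b)$ in $(\mathbb{R}^{2n+2},g,J)$ is an h-umbilical holomorphic hypersurface of constant totally real sectional curvatures $$\nu=\frac{a}{a^2+b^2}=g(H,H),\qquad \tilde\nu=\frac{-b}{a^2+b^2}=\tilde g(H,H),$$ where $H$ is its mean curvature vector.
   Context: On $\mathbb{R}^{2n+2}$ with points $Z=(x^1,\dots,x^{n+1};y^1,\dots,y^{n+1})$, let $J(x;y)=(y;-x)$, $g(Z,W)=\sum_k x_Z^kx_W^k-\sum_k y_Z^ky_W^k$, $\tilde g(Z,W)=g(JZ,W)$ (so $\tilde g(Z,Z)=2\sum_kx^ky^k$); this is a flat Kähler manifold with Norden metric. For $z_0$ with position vector $Z_0$ and $(a,b)\in\mathbb{R}^2\setminus\{(0,0)\}$, the h-sphere is $S^{2n}(z_0;a,b)=\{Z: g(Z-Z_0,Z-Z_0)=a,\ \tilde g(Z-Z_0,Z-Z_0)=b\}$. A holomorphic hypersurface is a $2n$-dimensional submanifold $M$ with $J(T_pM)=T_pM$ and $g|_{T_pM}$ nondegenerate; with induced Levi-Civita connection $\nabla$, $\sigma$ is defined by $\nabla'_XY=\nabla_XY+\sigma(X,Y)$, $H=\frac1{2n}\operatorname{trace}_g\sigma$, and $M$ is h-umbilical if $\sigma(x,y)=g(x,y)H-\tilde g(x,y)JH$ everywhere. Curvature: $R(X,Y)Z=\nabla_X\nabla_YZ-\nabla_Y\nabla_XZ-\nabla_{[X,Y]}Z$, $R(x,y,z,u)=g(R(x,y)z,u)$,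 $\tilde R(x,y,z,u)=R(x,y,z,Ju)$, $\pi_1(x,y,z,u)=g(y,z)g(x,u)-g(x,z)g(y,u)$; for a $g$-nondegenerate 2-plane $\beta\subset T_pM$ with basis $x,y$, $K(\beta;p)=R(x,y,y,x)/\pi_1(x,y,y,x)$, $\tilde K(\beta;p)=\tilde R(x,y,y,x)/\pi_1(x,y,y,x)$; $\beta$ is totally real if $\beta\neq J\beta$, $\beta\perp_g J\beta$. Constant totally real sectional curvatures $\nu,\tilde\nu$ means $K(\beta;p)=\nu$, $\tilde K(\beta;p)=\tilde\nu$ for all $p$ and all nondegenerate totally real $\beta$. *)

theory Defs
  imports "HOL-Analysis.Analysis"
begin

type_synonym 'n pt = "(real^'n) \<times> (real^'n)"

definition Jop :: "('n::finite) pt \<Rightarrow> 'n pt" where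
  "Jop Z = (snd Z, - fst Z)"

definition gN :: "('n::finite) pt \<Rightarrow> 'n pt \<Rightarrow> real" where
  "gN Z W = fst Z \<bullet> fst W - snd Z \<bullet> snd W"

definition gT :: "('n::finite) pt \<Rightarrow> 'n pt \<Rightarrow> real" where
  "gT Z W = gN (Jop Z) W"

definition hsphere :: "('n::finite) pt \<Rightarrow> real \<Rightarrow> real \<Rightarrow> 'n pt set" where
  "hsphere Z0 a b = {Z. gN (Z - Z0) (Z - Z0) = a \<and> gT (Z - Z0) (Z - Z0) = b}"

fun Ck_on :: "nat \<Rightarrow> 'a::euclidean_space set \<Rightarrow> ('a \<Rightarrow> 'b::euclidean_space) \<Rightarrow> bool" where
  "Ck_on 0 U f = continuous_on U f"
| "Ck_on (Suc k) U f =
     ((\<forall>x\<in>U. f differentiable (at x)) \<and>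
      (\<forall>v. Ck_on k U (\<lambda>x. frechet_derivative f (at x) v)))"

definition smooth_on :: "'a::euclidean_space set \<Rightarrow> ('a \<Rightarrow> 'b::euclidean_space) \<Rightarrow> bool" where
  "smooth_on U f \<longleftrightarrow> open U \<and> (\<forall>k. Ck_on k U f)"

definition submanifold_codim2 :: "'a::euclidean_space set \<Rightarrow> bool" where
  "submanifold_codim2 M \<longleftrightarrow>
    (\<forall>p\<in>M. \<exists>U (F :: 'a \<Rightarrow> real \<times> real). p \<in> U \<and> smooth_on U F \<and>
        M \<inter> U = {q\<in>U. F q = 0} \<and>
        (\<forall>q\<in>M \<inter> U. surj (frechet_derivative F (at q))))"

definition tangent_space :: "'a::euclidean_space set \<Rightarrow> 'a \<Rightarrow> 'a set" where
  "tangent_space M p = {v. \<exists>\<gamma>::real \<Rightarrow> 'a. \<gamma> 0 = p \<and> (\<forall>t\<in>{-1<..<1}. \<gamma> t \<in> M) \<and>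
        (\<gamma> has_vector_derivative v) (at 0)}"

definition nondeg :: "('n::finite) pt set \<Rightarrow> bool" where
  "nondeg V \<longleftrightarrow> (\<forall>v\<in>V. (\<forall>w\<in>V. gN v w = 0) \<longrightarrow> v = 0)"

definition holomorphic_hypersurface :: "('n::finite) pt set \<Rightarrow> bool" where
  "holomorphic_hypersurface M \<longleftrightarrow> submanifold_codim2 M \<and>
     (\<forall>p\<in>M. Jop ` tangent_space M p = tangent_space M p \<and> nondeg (tangent_space M p))"

definition tan_proj :: "('n::finite) pt set \<Rightarrow> 'n pt \<Rightarrow> 'n pt \<Rightarrow> 'n pt" where
  "tan_proj M p w = (THE u. u \<in> tangent_space M p \<and> (\<forall>v\<in>tangent_space M p. gN (w - u) v = 0))"

definition tangent_field :: "('n::finite) pt set \<Rightarrow> ('n pt \<Rightarrow> 'n pt) \<Rightarrow> bool" where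
  "tangent_field M X \<longleftrightarrow> (\<exists>U. M \<subseteq> U \<and> smooth_on U X) \<and> (\<forall>p\<in>M. X p \<in> tangent_space M p)"

definition dD :: "('n::finite) pt set \<Rightarrow> ('n pt \<Rightarrow> 'n pt) \<Rightarrow> 'n pt \<Rightarrow> 'n pt \<Rightarrow> 'n pt" where
  "dD M f p v = frechet_derivative f (at p within M) v"

definition flatD :: "('n::finite) pt set \<Rightarrow> ('n pt \<Rightarrow> 'n pt) \<Rightarrow> ('n pt \<Rightarrow> 'n pt) \<Rightarrow> 'n pt \<Rightarrow> 'n pt" where
  "flatD M X Y p = dD M Y p (X p)"

definition nabla :: "('n::finite) pt set \<Rightarrow> ('n pt \<Rightarrow> 'n pt) \<Rightarrow> ('n pt \<Rightarrow> 'n pt) \<Rightarrow> 'n pt \<Rightarrow> 'n pt" where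
  "nabla M X Y p = tan_proj M p (flatD M X Y p)"

definition lie :: "('n::finite) pt set \<Rightarrow> ('n pt \<Rightarrow> 'n pt) \<Rightarrow> ('n pt \<Rightarrow> 'n pt) \<Rightarrow> 'n pt \<Rightarrow> 'n pt" where
  "lie M X Y p = flatD M X Y p - flatD M Y X p"

definition curvR :: "('n::finite) pt set \<Rightarrow> ('n pt \<Rightarrow> 'n pt) \<Rightarrow> ('n pt \<Rightarrow> 'n pt) \<Rightarrow> ('n pt \<Rightarrow> 'n pt)
     \<Rightarrow> 'n pt \<Rightarrow> 'n pt" where
  "curvR M X Y Z p = nabla M X (nabla M Y Z) p - nabla M Y (nabla M X Z) p - nabla M (lie M X Y) Z p"

text \<open>Extension of a tangent vector at p to a smooth tangent vector field
  (the pointwise tensors below do not depend on the choice).\<close>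
definition ext_field :: "('n::finite) pt set \<Rightarrow> 'n pt \<Rightarrow> 'n pt \<Rightarrow> ('n pt \<Rightarrow> 'n pt)" where
  "ext_field M p v = (SOME X. tangent_field M X \<and> X p = v)"

definition sigma :: "('n::finite) pt set \<Rightarrow> 'n pt \<Rightarrow> 'n pt \<Rightarrow> 'n pt \<Rightarrow> 'n pt" where
  "sigma M p x y = flatD M (ext_field M p x) (ext_field M p y) p - nabla M (ext_field M p x) (ext_field M p y) p"

definition Rp :: "('n::finite) pt set \<Rightarrow> 'n pt \<Rightarrow> 'n pt \<Rightarrow> 'n pt \<Rightarrow> 'n pt \<Rightarrow> 'n pt" where
  "Rp M p x y z = curvR M (ext_field M p x) (ext_field M p y) (ext_field M p z) p"

definition R4 :: "('n::finite) pt set \<Rightarrow> 'n pt \<Rightarrow> 'n pt \<Rightarrow> 'n pt \<Rightarrow> 'n pt \<Rightarrow> 'n pt \<Rightarrow> real" where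
  "R4 M p x y z u = gN (Rp M p x y z) u"

definition Rt4 :: "('n::finite) pt set \<Rightarrow> 'n pt \<Rightarrow> 'n pt \<Rightarrow> 'n pt \<Rightarrow> 'n pt \<Rightarrow> 'n pt \<Rightarrow> real" where
  "Rt4 M p x y z u = R4 M p x y z (Jop u)"

definition pi1 :: "('n::finite) pt \<Rightarrow> 'n pt \<Rightarrow> 'n pt \<Rightarrow> 'n pt \<Rightarrow> real" where
  "pi1 x y z u = gN y z * gN x u - gN x z * gN y u"

definition Ksec :: "('n::finite) pt set \<Rightarrow> 'n pt \<Rightarrow> 'n pt \<Rightarrow> 'n pt \<Rightarrow> real" where
  "Ksec M p x y = R4 M p x y y x / pi1 x y y x"

definition Ktsec :: "('n::finite) pt set \<Rightarrow> 'n pt \<Rightarrow> 'n pt \<Rightarrow> 'n pt \<Rightarrow> real" where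
  "Ktsec M p x y = Rt4 M p x y y x / pi1 x y y x"

definition g_orthonormal_basis :: "('n::finite) pt set \<Rightarrow> 'n pt list \<Rightarrow> bool" where
  "g_orthonormal_basis V es \<longleftrightarrow> distinct es \<and> independent (set es) \<and> span (set es) = V \<and>
     (\<forall>i<length es. \<forall>j<length es. i \<noteq> j \<longrightarrow> gN (es!i) (es!j) = 0) \<and>
     (\<forall>e\<in>set es. gN e e = 1 \<or> gN e e = -1)"

definition trace_g :: "('n::finite) pt set \<Rightarrow> ('n pt \<Rightarrow> 'n pt \<Rightarrow> 'n pt) \<Rightarrow> 'n pt" where
  "trace_g V B = (let es = (SOME es. g_orthonormal_basis V es) in (\<Sum>e\<leftarrow>es. gN e e *\<^sub>R B e e))"

definition meanH :: "nat \<Rightarrow> ('n::finite) pt set \<Rightarrow> 'n pt \<Rightarrow> 'n pt" where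
  "meanH n M p = (1 / (2 * real n)) *\<^sub>R trace_g (tangent_space M p) (sigma M p)"

definition h_umbilical :: "nat \<Rightarrow> ('n::finite) pt set \<Rightarrow> bool" where
  "h_umbilical n M \<longleftrightarrow> (\<forall>p\<in>M. \<forall>x\<in>tangent_space M p. \<forall>y\<in>tangent_space M p.
      sigma M p x y = gN x y *\<^sub>R meanH n M p - gT x y *\<^sub>R Jop (meanH n M p))"

definition totally_real :: "('n::finite) pt set \<Rightarrow> bool" where
  "totally_real \<beta> \<longleftrightarrow> Jop ` \<beta> \<noteq> \<beta> \<and> (\<forall>u\<in>\<beta>. \<forall>w\<in>\<beta>. gN u (Jop w) = 0)"

definition const_totally_real_curv :: "('n::finite) pt set \<Rightarrow> real \<Rightarrow> real \<Rightarrow> bool" where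
  "const_totally_real_curv M \<nu> \<nu>t \<longleftrightarrow>
    (\<forall>p\<in>M. \<forall>\<beta> x y. subspace \<beta> \<and> \<beta> \<subseteq> tangent_space M p \<and> dim \<beta> = 2 \<and> nondeg \<beta> \<and>
        totally_real \<beta> \<and> x \<in> \<beta> \<and> y \<in> \<beta> \<and> span {x, y} = \<beta> \<longrightarrow>
        Ksec M p x y = \<nu> \<and> Ktsec M p x y = \<nu>t)"

end

theory Submission
  imports Defs "HOL-Analysis.Complex_Transcendental"
begin

text \<open>
  Put \<open>W = p - z\<^sub>0\<close>. On the h-sphere \<open>g(W,W) = a\<close> and \<open>g(JW,W) = b\<close>, so the Gram matrix of
  \<open>W, JW\<close> is \<open>[[a,b],[b,-a]]\<close> with determinant \<open>-(a\<^sup>2+b\<^sup>2) \<noteq> 0\<close>. Hence the tangent space is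
  the \<open>g\<close>-orthogonal complement of the nondegenerate, \<open>J\<close>-invariant plane \<open>span {W, JW}\<close>, and the
  normal projection is explicit. Differentiating \<open>g(Y,W) = 0\<close> and \<open>g(Y,JW) = 0\<close> for a tangent
  field \<open>Y\<close> gives \<open>\<sigma>(x,y) = -g(x,y) A + g(Jx,y) JA\<close> with \<open>A = (aW + bJW)/(a\<^sup>2+b\<^sup>2)\<close>. Tracing
  over a \<open>g\<close>-orthonormal basis of the \<open>2n\<close>-dimensional tangent space yields \<open>H = -A\<close>, which is
  h-umbilicity. The Gauss equation, for which the symmetry of second derivatives of the fields
  is needed, expresses the curvature through \<open>\<sigma>\<close>; on a totally real plane only the terms
  \<open>g(H,H)\<close> and \<open>g\<^sup>~(H,H)\<close> survive.
\<close>

lemma gN_add_left [simp]: "gN (u + v) w = gN u w + gN v w"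
  by (simp add: gN_def inner_add_left)

lemma gN_add_right [simp]: "gN w (u + v) = gN w u + gN w v"
  by (simp add: gN_def inner_add_right)

lemma gN_diff_left: "gN (u - v) w = gN u w - gN v w"
  by (simp add: gN_def inner_diff_left)

lemma gN_diff_right: "gN w (u - v) = gN w u - gN w v"
  by (simp add: gN_def inner_diff_right)

lemma gN_minus_left [simp]: "gN (- u) w = - gN u w"
  by (simp add: gN_def)

lemma gN_minus_right [simp]: "gN w (- u) = - gN w u"
  by (simp add: gN_def)

lemma gN_scaleR_left [simp]: "gN (c *\<^sub>R u) w = c * gN u w"
  by (simp add: gN_def algebra_simps)

lemma gN_scaleR_right [simp]: "gN w (c *\<^sub>R u) = c * gN w u"
  by (simp add: gN_def algebra_simps)

lemma gN_zero_left [simp]: "gN 0 w = 0"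
  by (simp add: gN_def)

lemma gN_zero_right [simp]: "gN w 0 = 0"
  by (simp add: gN_def)

lemma gN_commute: "gN u w = gN w u"
  by (simp add: gN_def inner_commute)

lemma gN_sum_left: "gN (sum f S) w = (\<Sum>x\<in>S. gN (f x) w)"
  by (induct S rule: infinite_finite_induct) auto

lemma Jop_add [simp]: "Jop (u + v) = Jop u + Jop v"
  by (simp add: Jop_def)

lemma Jop_diff: "Jop (u - v) = Jop u - Jop v"
  by (simp add: Jop_def)

lemma Jop_minus [simp]: "Jop (- u) = - Jop u"
  by (simp add: Jop_def)

lemma Jop_scaleR [simp]: "Jop (c *\<^sub>R u) = c *\<^sub>R Jop u"
  by (simp add: Jop_def)

lemma Jop_zero [simp]: "Jop 0 = 0"
  by (simp add: Jop_def zero_prod_def)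

lemma Jop_Jop [simp]: "Jop (Jop u) = - u"
  by (simp add: Jop_def prod_eq_iff)

lemma gN_Jop_Jop [simp]: "gN (Jop u) (Jop w) = - gN u w"
  by (simp add: gN_def Jop_def inner_commute)

lemma gN_Jop_swap: "gN (Jop u) w = gN u (Jop w)"
  by (simp add: gN_def Jop_def inner_commute)

lemma bounded_linear_Jop: "bounded_linear Jop"
  by (simp add: linear_conv_bounded_linear[symmetric] linearI)

lemma bounded_bilinear_gN: "bounded_bilinear gN"
  unfolding bilinear_conv_bounded_bilinear[symmetric] bilinear_def
  by (intro conjI allI linearI)
     (simp_all only: gN_add_left gN_add_right gN_scaleR_left gN_scaleR_right real_scaleR_def)

lemma gN_nondegenerate:
  assumes "\<And>w. gN v w = 0"
  shows "v = 0"
proof -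
  have "gN v (fst v, - snd v) = 0" by (rule assms)
  hence "fst v \<bullet> fst v + snd v \<bullet> snd v = 0" by (simp add: gN_def)
  hence "fst v = 0 \<and> snd v = 0"
    by (metis add_nonneg_eq_0_iff inner_eq_zero_iff inner_ge_zero)
  thus "v = 0" by (simp add: prod_eq_iff)
qed

lemma sum_Basis_prod:
  fixes f :: "('a::euclidean_space \<times> 'b::euclidean_space) \<Rightarrow> 'c::comm_monoid_add"
  shows "sum f Basis = (\<Sum>i\<in>Basis. f (i, 0)) + (\<Sum>i\<in>Basis. f (0, i))"
proof -
  have "inj_on (\<lambda>u. (u::'a, 0::'b)) Basis" "inj_on (\<lambda>u. (0::'a, u::'b)) Basis"
    by (auto intro!: inj_onI)
  thus ?thesis
    unfolding Basis_prod_def by (subst sum.union_disjoint) (auto simp: sum.reindex)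
qed

text \<open>The standard basis is \<open>g\<close>-orthonormal, with signs \<open>gN s s = \<plusminus>1\<close>.\<close>
lemma gN_Basis_expansion:
  "(\<Sum>s\<in>(Basis::('n::finite) pt set). gN s s * gN u s * gN s v) = gN u v"
proof -
  have "(\<Sum>i\<in>(Basis::(real^'n) set). gN (i, 0) (i, 0) * gN u (i, 0) * gN (i, 0) v) = fst u \<bullet> fst v"
    by (simp add: gN_def euclidean_inner[of "fst u" "fst v"] inner_commute)
  moreover have "(\<Sum>i\<in>(Basis::(real^'n) set). gN (0, i) (0, i) * gN u (0, i) * gN (0, i) v)
      = - (snd u \<bullet> snd v)"
    by (simp add: gN_def euclidean_inner[of "snd u" "snd v"] inner_commute sum_negf)
  ultimately show ?thesis
    unfolding sum_Basis_prod[where f = "\<lambda>s. gN s s * gN u s * gN s v"] by (simp add: gN_def)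
qed

lemma gN_Basis_sign_square: "s \<in> (Basis::('n::finite) pt set) \<Longrightarrow> gN s s * gN s s = 1"
  by (auto simp: Basis_prod_def gN_def)

lemma gN_Jop_Basis: "s \<in> (Basis::('n::finite) pt set) \<Longrightarrow> gN (Jop s) s = 0"
  by (auto simp: Basis_prod_def gN_def Jop_def)

lemma card_Basis_pt: "card (Basis::('n::finite) pt set) = 2 * CARD('n)"
  using DIM_prod[where 'a="real^'n" and 'b="real^'n"] by simp

section \<open>\<open>g\<close>-orthonormal bases of nondegenerate subspaces\<close>

lemma gN_polarization_zero:
  assumes V: "subspace V" and isotropic: "\<forall>u\<in>V. gN u u = 0" and "u \<in> V" "w \<in> V"
  shows "gN u w = 0"
proof -
  have "u + w \<in> V" using assms by (simp add: subspace_add)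
  hence "gN (u + w) (u + w) = 0" using isotropic by blast
  moreover have "gN u u = 0" "gN w w = 0" using assms by auto
  ultimately show ?thesis using gN_commute[of w u] by (simp add: algebra_simps)
qed

lemma nondeg_has_non_null_vector:
  assumes "subspace V" "nondeg V" "V \<noteq> {0}"
  obtains u where "u \<in> V" "gN u u \<noteq> 0"
proof -
  obtain u0 where u0: "u0 \<in> V" "u0 \<noteq> 0" using assms(1,3) subspace_0 by blast
  have "\<exists>u\<in>V. gN u u \<noteq> 0"
  proof (rule ccontr)
    assume "\<not> ?thesis"
    hence "\<forall>w\<in>V. gN u0 w = 0" using gN_polarization_zero[OF assms(1)] u0 by blast
    thus False using assms(2) u0 unfolding nondeg_def by blast
  qed
  thus ?thesis using that by blast
qed

lemma g_orthogonal_decomposition: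
  assumes "subspace V" "e \<in> V" "gN e e * gN e e = 1" "w \<in> V"
  shows "w - (gN e e * gN w e) *\<^sub>R e \<in> {v \<in> V. gN e v = 0}"
proof -
  have "gN e (w - (gN e e * gN w e) *\<^sub>R e) = gN e w - gN e e * gN w e * gN e e"
    by (simp add: gN_diff_right)
  also have "\<dots> = 0" using assms(3) gN_commute[of e w] by (simp add: algebra_simps)
  finally show ?thesis using assms by (simp add: subspace_diff subspace_scale)
qed

lemma nondeg_g_orthogonal_complement:
  assumes V: "subspace V" "nondeg V" and e: "e \<in> V" "gN e e * gN e e = 1"
  shows "nondeg {v \<in> V. gN e v = 0}"
  unfolding nondeg_def
proof (intro ballI impI)
  fix v assume v: "v \<in> {v \<in> V. gN e v = 0}" and h: "\<forall>w\<in>{v \<in> V. gN e v = 0}. gN v w = 0"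
  have "gN v w = 0" if w: "w \<in> V" for w
  proof -
    have "gN v w = gN v (w - (gN e e * gN w e) *\<^sub>R e) + (gN e e * gN w e) * gN v e"
      by (simp add: gN_diff_right)
    moreover have "gN v (w - (gN e e * gN w e) *\<^sub>R e) = 0"
      using h g_orthogonal_decomposition[OF V(1) e w] by blast
    ultimately show ?thesis using v gN_commute[of v e] by simp
  qed
  thus "v = 0" using V(2) v unfolding nondeg_def by blast
qed

lemma g_orthonormal_basis_Cons:
  assumes V: "subspace V" and e: "e \<in> V" "gN e e = 1 \<or> gN e e = -1"
    and es: "g_orthonormal_basis {v \<in> V. gN e v = 0} es"
  shows "g_orthonormal_basis V (e # es)"
  unfolding g_orthonormal_basis_def
proof (intro conjI)
  let ?V' = "{v \<in> V. gN e v = 0}"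
  have V': "subspace ?V'" using V unfolding subspace_def by auto
  have sub: "set es \<subseteq> ?V'" using es V' span_superset unfolding g_orthonormal_basis_def by blast
  have ee: "gN e e * gN e e = 1" using e(2) by auto
  have eV': "e \<notin> span (set es)" using es e(2) by (auto simp: g_orthonormal_basis_def)
  show "distinct (e # es)" using es eV' span_superset by (auto simp: g_orthonormal_basis_def)
  show "independent (set (e # es))"
    using es eV' dependent_insertD by (auto simp: g_orthonormal_basis_def)
  show "span (set (e # es)) = V"
  proof
    show "span (set (e # es)) \<subseteq> V"
      using sub e V span_minimal[of "set (e # es)" V] by auto
    show "V \<subseteq> span (set (e # es))"
    proof
      fix w assume "w \<in> V"
      hence "w - (gN e e * gN w e) *\<^sub>R e \<in> span (set es)"
        using g_orthogonal_decomposition[OF V e(1) ee] es by (simp add: g_orthonormal_basis_def)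
      thus "w \<in> span (set (e # es))" by (auto simp: span_insert)
    qed
  qed
  have ort: "gN e x = 0" "gN x e = 0" if "x \<in> set es" for x
    using that sub gN_commute[of x e] by auto
  show "\<forall>i<length (e # es). \<forall>j<length (e # es). i \<noteq> j \<longrightarrow> gN ((e # es) ! i) ((e # es) ! j) = 0"
  proof (intro allI impI)
    fix i j assume "i < length (e # es)" "j < length (e # es)" "i \<noteq> j"
    thus "gN ((e # es) ! i) ((e # es) ! j) = 0"
      using ort es unfolding g_orthonormal_basis_def
      by (cases i; cases j) auto
  qed
  show "\<forall>x\<in>set (e # es). gN x x = 1 \<or> gN x x = -1"
    using e(2) es unfolding g_orthonormal_basis_def by auto
qed

lemma g_orthonormal_basis_exists:
  assumes "subspace V" "nondeg V"
  shows "\<exists>es. g_orthonormal_basis V es"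
  using assms
proof (induction "dim V" arbitrary: V rule: less_induct)
  case less
  note V = less.prems(1) and nd = less.prems(2)
  show ?case
  proof (cases "V = {0}")
    case True
    hence "g_orthonormal_basis V []" by (simp add: g_orthonormal_basis_def independent_empty)
    thus ?thesis by blast
  next
    case False
    then obtain u where u: "u \<in> V" "gN u u \<noteq> 0"
      using nondeg_has_non_null_vector[OF V nd] by blast
    define e where "e = (1 / sqrt \<bar>gN u u\<bar>) *\<^sub>R u"
    have ee: "gN e e = gN u u / \<bar>gN u u\<bar>"
      using u(2) by (simp add: e_def power2_eq_square[symmetric])
    have ee1: "gN e e = 1 \<or> gN e e = -1" unfolding ee using u(2) by (cases "gN u u > 0") auto
    have eV: "e \<in> V" using u V by (simp add: e_def subspace_scale)
    define V' where "V' = {v \<in> V. gN e v = 0}"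
    have V': "subspace V'" using V unfolding V'_def subspace_def by auto
    have "e \<notin> V'" using ee1 by (auto simp: V'_def)
    hence "V' \<subset> V" using eV unfolding V'_def by blast
    hence "dim V' < dim V" using V V' by (metis dim_psubset span_eq_iff)
    moreover have "nondeg V'"
      unfolding V'_def using nondeg_g_orthogonal_complement[OF V nd eV] ee1 by auto
    ultimately obtain es where "g_orthonormal_basis V' es" using less.hyps V' by blast
    thus ?thesis using g_orthonormal_basis_Cons[OF V eV ee1] unfolding V'_def by blast
  qed
qed

lemma g_orthonormal_basis_orthogonal:
  assumes "g_orthonormal_basis V es" "e \<in> set es" "e' \<in> set es" "e \<noteq> e'"
  shows "gN e e' = 0"
proof -
  obtain i j where "i < length es" "es ! i = e" "j < length es" "es ! j = e'"
    using assms(2,3) by (auto simp: in_set_conv_nth)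
  thus ?thesis using assms(1,4) unfolding g_orthonormal_basis_def by blast
qed

lemma g_orthonormal_basis_sign_square:
  "g_orthonormal_basis V es \<Longrightarrow> e \<in> set es \<Longrightarrow> gN e e * gN e e = 1"
  unfolding g_orthonormal_basis_def by fastforce

lemma independent_pair_coeffs:
  assumes "independent {x, y}" "x \<noteq> y" "c1 *\<^sub>R x + c2 *\<^sub>R y = 0"
  shows "c1 = 0 \<and> c2 = 0"
proof -
  have c1: "c1 = 0"
  proof (rule ccontr)
    assume "c1 \<noteq> 0"
    hence "x = (1 / c1) *\<^sub>R (c1 *\<^sub>R x)" by simp
    also have "c1 *\<^sub>R x = - (c2 *\<^sub>R y)" using assms(3) by (simp add: eq_neg_iff_add_eq_0)
    finally have "x = (- c2 / c1) *\<^sub>R y" by simp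
    hence "x \<in> span {y}" by (metis span_base span_scale singletonI)
    thus False using assms(1,2) by (simp add: independent_insert)
  qed
  moreover have "y \<noteq> 0" using assms(1) dependent_zero by blast
  ultimately show ?thesis using assms(3) by simp
qed

lemma pi1_nonzero_if_nondeg:
  fixes x y :: "('n::finite) pt"
  assumes sp: "span {x, y} = B" and dB: "dim B = 2" and nd: "nondeg B"
  shows "pi1 x y y x \<noteq> 0"
proof
  assume z: "pi1 x y y x = 0"
  have xy: "x \<noteq> y"
  proof
    assume "x = y"
    hence "B \<subseteq> span {x}" using sp by simp
    hence "dim B \<le> card {x}" by (rule dim_le_card) simp
    thus False using dB by simp
  qed
  have ind: "independent {x, y}"
    using xy dB sp card_eq_dim[of "{x, y}" "span {x, y}"] span_superset[of "{x, y}"] by simp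
  obtain c1 c2 where c: "(c1, c2) \<noteq> (0, 0)"
    and g1: "c1 * gN x x + c2 * gN y x = 0" and g2: "c1 * gN x y + c2 * gN y y = 0"
  proof (cases "gN y y = 0 \<and> gN x y = 0")
    case True thus ?thesis using that[of 0 1] gN_commute[of x y] by simp
  next
    case False
    have "gN y y * gN x x - gN x y * gN y x = 0"
      using z by (simp add: pi1_def gN_commute[of x y] mult.commute)
    thus ?thesis using that[of "gN y y" "- gN x y"] False gN_commute[of x y] by (simp add: algebra_simps)
  qed
  define v where "v = c1 *\<^sub>R x + c2 *\<^sub>R y"
  have "{x, y} \<subseteq> {u. gN v u = 0}" using g1 g2 gN_commute[of x y] by (simp add: v_def algebra_simps)
  hence "span {x, y} \<subseteq> {u. gN v u = 0}" by (rule span_minimal) (simp add: subspace_def)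
  moreover have "v \<in> B" unfolding v_def sp[symmetric] by (intro span_add span_scale span_base) auto
  ultimately have "v = 0" using nd sp unfolding nondeg_def by blast
  thus False using independent_pair_coeffs[OF ind xy] c by (simp add: v_def)
qed

lemma mem_if_tangent_space: "v \<in> tangent_space S p \<Longrightarrow> p \<in> S"
  unfolding tangent_space_def by force

lemma has_derivative_tangent_unique:
  assumes D: "(f has_derivative D) (at p within S)" and D': "(f has_derivative D') (at p within S)"
    and v: "v \<in> tangent_space S p"
  shows "D v = D' v"
proof -
  obtain \<gamma> where g0: "\<gamma> 0 = p" and gS: "\<forall>t\<in>{-1<..<1}. \<gamma> t \<in> S"
    and gd: "(\<gamma> has_vector_derivative v) (at 0)"
    using v unfolding tangent_space_def by blast
  let ?I = "{-1<..<1::real}"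
  have gd': "(\<gamma> has_derivative (\<lambda>t. t *\<^sub>R v)) (at 0 within ?I)"
    using gd unfolding has_vector_derivative_def by (rule has_derivative_at_withinI)
  have sub: "\<gamma> ` ?I \<subseteq> S" using gS by blast
  have at: "at (0::real) within ?I = at 0" by (rule at_within_open) auto
  have "((f \<circ> \<gamma>) has_derivative (D \<circ> (\<lambda>t. t *\<^sub>R v))) (at 0 within ?I)"
    by (rule diff_chain_within[OF gd']) (use has_derivative_subset[OF D sub] g0 in simp)
  moreover have "((f \<circ> \<gamma>) has_derivative (D' \<circ> (\<lambda>t. t *\<^sub>R v))) (at 0 within ?I)"
    by (rule diff_chain_within[OF gd']) (use has_derivative_subset[OF D' sub] g0 in simp)
  ultimately have "D \<circ> (\<lambda>t. t *\<^sub>R v) = D' \<circ> (\<lambda>t. t *\<^sub>R v)"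
    unfolding at by (rule has_derivative_unique)
  thus ?thesis by (metis comp_apply scaleR_one)
qed

lemma has_derivative_tangent_const:
  assumes D: "(f has_derivative D) (at p within S)" and c: "\<And>x. x \<in> S \<Longrightarrow> f x = c"
    and v: "v \<in> tangent_space S p"
  shows "D v = 0"
proof -
  have "(f has_derivative (\<lambda>_. 0)) (at p within S)"
    using mem_if_tangent_space[OF v] c
    by (intro has_derivative_transform_within[OF has_derivative_const zero_less_one]) auto
  from has_derivative_tangent_unique[OF D this v] show ?thesis .
qed

lemma dD_eq_derivative:
  assumes "(f has_derivative D) (at q within S)" "v \<in> tangent_space S q"
  shows "dD S f q v = D v"
proof -
  have "(f has_derivative frechet_derivative f (at q within S)) (at q within S)"
    using assms(1) differentiable_def frechet_derivative_works by blast
  from has_derivative_tangent_unique[OF this assms] show ?thesis by (simp add: dD_def)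
qed

lemma Ck_on_if_closed_class:
  assumes P: "\<And>f. f \<in> P \<Longrightarrow> (\<forall>x. f differentiable (at x)) \<and> continuous_on UNIV f \<and>
                     (\<forall>v. (\<lambda>x. frechet_derivative f (at x) v) \<in> P)"
  shows "f \<in> P \<Longrightarrow> Ck_on k U f"
proof (induction k arbitrary: f)
  case 0 thus ?case using P continuous_on_subset by fastforce
next
  case (Suc k) thus ?case using P by auto
qed

definition quadratic_maps :: "('a::euclidean_space \<Rightarrow> 'b::euclidean_space) set" where
  "quadratic_maps = {f. \<exists>Q L c. bounded_bilinear Q \<and> bounded_linear L \<and> f = (\<lambda>x. Q x x + L x + c)}"

lemma bounded_bilinear_zero: "bounded_bilinear (\<lambda>(x::'a::euclidean_space) (y::'a). 0::'b::euclidean_space)"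
  by (subst bilinear_conv_bounded_bilinear[symmetric]) (simp add: bilinear_def linear_zero)

lemma quadratic_maps_derivative:
  assumes "f \<in> quadratic_maps"
  shows "(\<forall>x. f differentiable (at x)) \<and> continuous_on UNIV f \<and>
    (\<forall>v. (\<lambda>x. frechet_derivative f (at x) v) \<in> quadratic_maps)"
proof -
  obtain Q L c where Q: "bounded_bilinear Q" and L: "bounded_linear L" and f: "f = (\<lambda>x. Q x x + L x + c)"
    using assms unfolding quadratic_maps_def by blast
  have d: "(f has_derivative (\<lambda>h. Q x h + Q h x + L h)) (at x)" for x
    unfolding f
    using has_derivative_add[OF has_derivative_add[OF
        bounded_bilinear.FDERIV[OF Q has_derivative_ident has_derivative_ident]
        bounded_linear.has_derivative[OF L has_derivative_ident]] has_derivative_const]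
    by simp
  have diff: "\<forall>x. f differentiable (at x)" using d differentiable_def by blast
  have fd: "frechet_derivative f (at x) = (\<lambda>h. Q x h + Q h x + L h)" for x
    using frechet_derivative_at[OF d] by simp
  have "(\<lambda>x. frechet_derivative f (at x) v) = (\<lambda>x. (\<lambda>x y. 0) x x + (\<lambda>x. Q x v + Q v x) x + L v)" for v
    by (simp add: fd)
  moreover have "bounded_linear (\<lambda>x. Q x v + Q v x)" for v
    using bounded_bilinear.bounded_linear_left[OF Q] bounded_bilinear.bounded_linear_right[OF Q]
    by (rule bounded_linear_add)
  ultimately have "(\<lambda>x. frechet_derivative f (at x) v) \<in> quadratic_maps" for v
    unfolding quadratic_maps_def using bounded_bilinear_zero by blast
  moreover have "continuous_on UNIV f"
    using diff differentiable_imp_continuous_on differentiable_on_def differentiable_at_withinI by blast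
  ultimately show ?thesis using diff by blast
qed

lemma smooth_on_quadratic_map:
  assumes "f \<in> quadratic_maps"
  shows "smooth_on UNIV f"
proof -
  have "Ck_on k UNIV f" for k
    by (rule Ck_on_if_closed_class[of quadratic_maps, OF _ assms]) (use quadratic_maps_derivative in auto)
  thus ?thesis unfolding smooth_on_def by simp
qed

lemma quadratic_map_shift:
  assumes Q: "bounded_bilinear Q" and L: "bounded_linear L"
  shows "(\<lambda>x. Q (x - z) (x - z) + L (x - z) + c) \<in> quadratic_maps"
proof -
  have e: "Q (x - z) (x - z) + L (x - z) + c = Q x x + ((- Q x z - Q z x) + L x) + (Q z z - L z + c)" for x
    by (simp add: bounded_bilinear.diff_left[OF Q] bounded_bilinear.diff_right[OF Q]
        linear_diff[OF bounded_linear.linear[OF L]] algebra_simps)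
  have "bounded_linear (\<lambda>x. (- Q x z - Q z x) + L x)"
    by (intro bounded_linear_add bounded_linear_sub bounded_linear_minus L
        bounded_bilinear.bounded_linear_left[OF Q] bounded_bilinear.bounded_linear_right[OF Q])
  thus ?thesis unfolding quadratic_maps_def e using Q by blast
qed

definition fderiv :: "('a::real_normed_vector \<Rightarrow> 'b::real_normed_vector) \<Rightarrow> 'a \<Rightarrow> 'a \<Rightarrow> 'b" where
  "fderiv f x = frechet_derivative f (at x)"

lemma smooth_on_has_derivative:
  assumes "smooth_on U X" "x \<in> U"
  shows "(X has_derivative fderiv X x) (at x)"
    and "((\<lambda>y. fderiv X y v) has_derivative fderiv (\<lambda>y. fderiv X y v) x) (at x)"
proof -
  have "Ck_on 1 U X" "Ck_on 2 U X" using assms(1) unfolding smooth_on_def by blast+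
  hence "X differentiable (at x)" "(\<lambda>y. fderiv X y v) differentiable (at x)"
    using assms(2) by (simp_all add: numeral_2_eq_2 fderiv_def)
  thus "(X has_derivative fderiv X x) (at x)"
    "((\<lambda>y. fderiv X y v) has_derivative fderiv (\<lambda>y. fderiv X y v) x) (at x)"
    unfolding fderiv_def using frechet_derivative_works by blast+
qed

lemma smooth_on_continuous_second_derivative:
  assumes "smooth_on U X"
  shows "continuous_on U (\<lambda>y. fderiv (\<lambda>y. fderiv X y v) y w)"
proof -
  have "Ck_on 2 U X" using assms unfolding smooth_on_def by blast
  thus ?thesis by (simp add: numeral_2_eq_2 fderiv_def)
qed

section \<open>Symmetry of second derivatives\<close>

lemma has_real_derivative_inner_along_line:
  fixes F :: "'a::real_normed_vector \<Rightarrow> 'b::real_inner"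
  assumes "(F has_derivative F') (at (q + s *\<^sub>R u))"
  shows "((\<lambda>s. F (q + s *\<^sub>R u) \<bullet> c) has_real_derivative (F' u \<bullet> c)) (at s)"
proof -
  have "((\<lambda>s. q + s *\<^sub>R u) has_derivative (\<lambda>r. r *\<^sub>R u)) (at s)"
    by (auto intro!: derivative_eq_intros)
  from has_derivative_inner_left[OF has_derivative_compose[OF this assms]]
  have "((\<lambda>s. F (q + s *\<^sub>R u) \<bullet> c) has_derivative (\<lambda>r. F' (r *\<^sub>R u) \<bullet> c)) (at s)" .
  moreover have "(\<lambda>r. F' (r *\<^sub>R u) \<bullet> c) = (*) (F' u \<bullet> c)"
    using linear_scale[OF has_derivative_linear[OF assms]] by (auto simp: fun_eq_iff)
  ultimately show ?thesis unfolding has_field_derivative_def by simp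
qed

text \<open>Two applications of the mean value theorem to the second difference over a square.\<close>
lemma second_difference_mvt:
  fixes Z :: "'a::real_normed_vector \<Rightarrow> 'b::real_inner"
  assumes h: "h > 0"
    and d1: "\<And>s t. s \<in> {0..h} \<Longrightarrow> t \<in> {0..h} \<Longrightarrow>
      (Z has_derivative DZ (p + s *\<^sub>R u + t *\<^sub>R w)) (at (p + s *\<^sub>R u + t *\<^sub>R w))"
    and d2: "\<And>s t. s \<in> {0..h} \<Longrightarrow> t \<in> {0..h} \<Longrightarrow>
      ((\<lambda>y. DZ y u) has_derivative D2 (p + s *\<^sub>R u + t *\<^sub>R w)) (at (p + s *\<^sub>R u + t *\<^sub>R w))"
  shows "\<exists>s\<in>{0..h}. \<exists>t\<in>{0..h}. (Z (p + h *\<^sub>R u + h *\<^sub>R w) - Z (p + h *\<^sub>R u) - Z (p + h *\<^sub>R w) + Z p) \<bullet> c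
      = h * (h * (D2 (p + s *\<^sub>R u + t *\<^sub>R w) w \<bullet> c))"
proof -
  have swap: "p + t *\<^sub>R w + s *\<^sub>R u = p + s *\<^sub>R u + t *\<^sub>R w" for s t
    by (simp add: algebra_simps)
  define g where "g = (\<lambda>s. Z (p + h *\<^sub>R w + s *\<^sub>R u) \<bullet> c - Z (p + s *\<^sub>R u) \<bullet> c)"
  have gd: "DERIV g s :> (DZ (p + h *\<^sub>R w + s *\<^sub>R u) u \<bullet> c - DZ (p + s *\<^sub>R u) u \<bullet> c)"
    if "0 \<le> s" "s \<le> h" for s
  proof -
    have "(Z has_derivative DZ (p + h *\<^sub>R w + s *\<^sub>R u)) (at (p + h *\<^sub>R w + s *\<^sub>R u))"
      using d1[of s h] that h by (simp add: swap[where s = s and t = h])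
    moreover have "(Z has_derivative DZ (p + s *\<^sub>R u)) (at (p + s *\<^sub>R u))"
      using d1[of s 0] that h by simp
    ultimately show ?thesis
      unfolding g_def by (intro DERIV_diff has_real_derivative_inner_along_line[where F = Z])
  qed
  obtain \<xi> where xi: "0 < \<xi>" "\<xi> < h"
    and g1: "g h - g 0 = (h - 0) * (DZ (p + h *\<^sub>R w + \<xi> *\<^sub>R u) u \<bullet> c - DZ (p + \<xi> *\<^sub>R u) u \<bullet> c)"
    using MVT2[OF h gd] by blast
  define k where "k = (\<lambda>t. DZ (p + \<xi> *\<^sub>R u + t *\<^sub>R w) u \<bullet> c)"
  have kd: "DERIV k t :> (D2 (p + \<xi> *\<^sub>R u + t *\<^sub>R w) w \<bullet> c)" if "0 \<le> t" "t \<le> h" for t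
    unfolding k_def using that xi
    by (intro has_real_derivative_inner_along_line[where F = "\<lambda>y. DZ y u"] d2) auto
  obtain \<eta> where eta: "0 < \<eta>" "\<eta> < h"
    and k1: "k h - k 0 = (h - 0) * (D2 (p + \<xi> *\<^sub>R u + \<eta> *\<^sub>R w) w \<bullet> c)"
    using MVT2[OF h kd] by blast
  have "(Z (p + h *\<^sub>R u + h *\<^sub>R w) - Z (p + h *\<^sub>R u) - Z (p + h *\<^sub>R w) + Z p) \<bullet> c = g h - g 0"
    by (simp add: g_def inner_diff_left inner_add_left swap[where s = h and t = h])
  also have "\<dots> = h * (h * (D2 (p + \<xi> *\<^sub>R u + \<eta> *\<^sub>R w) w \<bullet> c))"
    using g1 k1 by (simp add: k_def swap[where s = \<xi> and t = h])
  finally show ?thesis using xi eta by force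
qed

lemma dist_add_scaleR_le:
  assumes "s \<in> {0..h}" "t \<in> {0..h}"
  shows "dist (p + s *\<^sub>R u + t *\<^sub>R w) p \<le> h * (norm u + norm w)"
proof -
  have "dist (p + s *\<^sub>R u + t *\<^sub>R w) p = norm (s *\<^sub>R u + t *\<^sub>R w)"
    by (simp add: dist_norm)
  also have "\<dots> \<le> norm (s *\<^sub>R u) + norm (t *\<^sub>R w)"
    by (rule norm_triangle_ineq)
  also have "\<dots> \<le> h * norm u + h * norm w"
    using assms by (auto intro!: add_mono mult_right_mono)
  finally show ?thesis by (simp add: algebra_simps)
qed

lemma second_difference_mvt_ball:
  fixes Z :: "'a::real_normed_vector \<Rightarrow> 'b::real_inner"
  assumes h: "h > 0" and hR: "h * (norm u + norm w) < R" and R: "ball p R \<subseteq> U"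
    and dZ: "\<And>q. q \<in> U \<Longrightarrow> (Z has_derivative DZ q) (at q)"
    and du: "\<And>q. q \<in> U \<Longrightarrow> ((\<lambda>y. DZ y u) has_derivative D2 q) (at q)"
  obtains q where "dist q p < R"
    "(Z (p + h *\<^sub>R u + h *\<^sub>R w) - Z (p + h *\<^sub>R u) - Z (p + h *\<^sub>R w) + Z p) \<bullet> c = h * (h * (D2 q w \<bullet> c))"
proof -
  have close: "dist (p + s *\<^sub>R u + t *\<^sub>R w) p < R" if "s \<in> {0..h}" "t \<in> {0..h}" for s t
    using dist_add_scaleR_le[OF that, of p u w] hR by linarith
  have inU: "p + s *\<^sub>R u + t *\<^sub>R w \<in> U" if "s \<in> {0..h}" "t \<in> {0..h}" for s t
    using close[OF that] by (intro subsetD[OF R]) (simp add: dist_commute)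
  have "\<exists>s\<in>{0..h}. \<exists>t\<in>{0..h}. (Z (p + h *\<^sub>R u + h *\<^sub>R w) - Z (p + h *\<^sub>R u) - Z (p + h *\<^sub>R w) + Z p) \<bullet> c
      = h * (h * (D2 (p + s *\<^sub>R u + t *\<^sub>R w) w \<bullet> c))"
    using dZ[OF inU] du[OF inU] by (rule second_difference_mvt[OF h])
  then obtain s t where "s \<in> {0..h}" "t \<in> {0..h}"
    "(Z (p + h *\<^sub>R u + h *\<^sub>R w) - Z (p + h *\<^sub>R u) - Z (p + h *\<^sub>R w) + Z p) \<bullet> c
      = h * (h * (D2 (p + s *\<^sub>R u + t *\<^sub>R w) w \<bullet> c))"
    by blast
  thus ?thesis using that close by blast
qed

text \<open>Schwarz's theorem: compare the mean value expressions of the second difference taken in the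
  two orders, and let the square shrink.\<close>
lemma second_derivative_symmetric:
  fixes Z :: "'a::euclidean_space \<Rightarrow> 'b::euclidean_space"
  assumes U: "open U" "p \<in> U"
    and dZ: "\<And>q. q \<in> U \<Longrightarrow> (Z has_derivative DZ q) (at q)"
    and du: "\<And>q. q \<in> U \<Longrightarrow> ((\<lambda>y. DZ y u) has_derivative D2u q) (at q)"
    and dw: "\<And>q. q \<in> U \<Longrightarrow> ((\<lambda>y. DZ y w) has_derivative D2w q) (at q)"
    and cu: "continuous_on U (\<lambda>q. D2u q w)" and cw: "continuous_on U (\<lambda>q. D2w q u)"
  shows "D2u p w = D2w p u"
proof (rule ccontr)
  assume ne: "D2u p w \<noteq> D2w p u"
  define c where "c = D2u p w - D2w p u"
  define A where "A = (\<lambda>q. D2u q w \<bullet> c)"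
  define B where "B = (\<lambda>q. D2w q u \<bullet> c)"
  define \<epsilon> where "\<epsilon> = (A p - B p) / 2"
  have "A p - B p > 0" using ne by (simp add: A_def B_def c_def inner_diff_left[symmetric])
  hence eps: "\<epsilon> > 0" by (simp add: \<epsilon>_def)
  have "continuous (at p) A" unfolding A_def
    using cu U by (intro continuous_intros) (simp add: continuous_on_eq_continuous_at)
  then obtain d1 where d1: "d1 > 0" "\<And>q. dist q p < d1 \<Longrightarrow> dist (A q) (A p) < \<epsilon>"
    using eps unfolding continuous_at_eps_delta by blast
  have "continuous (at p) B" unfolding B_def
    using cw U by (intro continuous_intros) (simp add: continuous_on_eq_continuous_at)
  then obtain d2 where d2: "d2 > 0" "\<And>q. dist q p < d2 \<Longrightarrow> dist (B q) (B p) < \<epsilon>"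
    using eps unfolding continuous_at_eps_delta by blast
  obtain r where r: "r > 0" "ball p r \<subseteq> U" using U open_contains_ball by blast
  define R where "R = min r (min d1 d2)"
  have R: "R > 0" using r d1 d2 by (simp add: R_def)
  have ball: "ball p R \<subseteq> U" using r(2) subset_ball[of R r p] by (simp add: R_def)
  have nn: "norm u + norm w + 1 > 0" by (simp add: add_nonneg_pos)
  define h where "h = R / (2 * (norm u + norm w + 1))"
  have h: "h > 0" unfolding h_def using R nn by simp
  have "h * (norm u + norm w) < h * (2 * (norm u + norm w + 1))"
    using h by (intro mult_strict_left_mono) (auto simp: add_nonneg_pos)
  also have "\<dots> = R" using nn by (simp add: h_def)
  finally have hR: "h * (norm u + norm w) < R" "h * (norm w + norm u) < R" by (simp_all add: add.commute)
  obtain q1 where q1: "dist q1 p < R"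
    and e1: "(Z (p + h *\<^sub>R u + h *\<^sub>R w) - Z (p + h *\<^sub>R u) - Z (p + h *\<^sub>R w) + Z p) \<bullet> c
      = h * (h * (D2u q1 w \<bullet> c))"
    by (rule second_difference_mvt_ball[OF h hR(1) ball dZ du])
  obtain q2 where q2: "dist q2 p < R"
    and e2: "(Z (p + h *\<^sub>R w + h *\<^sub>R u) - Z (p + h *\<^sub>R w) - Z (p + h *\<^sub>R u) + Z p) \<bullet> c
      = h * (h * (D2w q2 u \<bullet> c))"
    by (rule second_difference_mvt_ball[OF h hR(2) ball dZ dw])
  have swap: "Z (p + h *\<^sub>R w + h *\<^sub>R u) - Z (p + h *\<^sub>R w) - Z (p + h *\<^sub>R u) + Z p =
        Z (p + h *\<^sub>R u + h *\<^sub>R w) - Z (p + h *\<^sub>R u) - Z (p + h *\<^sub>R w) + Z p"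
    by (simp add: algebra_simps)
  have "h * (h * A q1) = h * (h * B q2)"
    using e1 e2 unfolding swap A_def B_def by metis
  hence "A q1 = B q2" using h by simp
  moreover have "dist (A q1) (A p) < \<epsilon>" "dist (B q2) (B p) < \<epsilon>"
    using d1(2) d2(2) q1 q2 by (simp_all add: R_def)
  ultimately have "\<bar>A p - B p\<bar> < 2 * \<epsilon>" by (simp add: dist_real_def)
  thus False using eps by (simp add: \<epsilon>_def)
qed

lemma linear_eq_sum_Basis:
  fixes L :: "'a::euclidean_space \<Rightarrow> 'b::real_vector"
  assumes "linear L"
  shows "L y = (\<Sum>b\<in>Basis. (y \<bullet> b) *\<^sub>R L b)"
  by (metis (no_types, lifting) assms euclidean_representation linear_scale linear_sum sum.cong)

definition hessian :: "('a::euclidean_space \<Rightarrow> 'b::euclidean_space) \<Rightarrow> 'a \<Rightarrow> 'a \<Rightarrow> 'a \<Rightarrow> 'b" where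
  "hessian Z p h y = (\<Sum>b\<in>Basis. (y \<bullet> b) *\<^sub>R fderiv (\<lambda>q. fderiv Z q b) p h)"

lemma has_derivative_fderiv_along_field:
  fixes Z :: "'a::euclidean_space \<Rightarrow> 'b::euclidean_space" and Y :: "'a \<Rightarrow> 'a"
  assumes Z: "smooth_on U Z" and Y: "smooth_on U' Y" and p: "p \<in> U" "p \<in> U'"
  shows "((\<lambda>q. fderiv Z q (Y q)) has_derivative
           (\<lambda>h. fderiv Z p (fderiv Y p h) + hessian Z p h (Y p))) (at p)"
proof -
  have linZ: "linear (fderiv Z q)" if "q \<in> U" for q
    using has_derivative_linear[OF smooth_on_has_derivative(1)[OF Z that]] .
  have "((\<lambda>q. (Y q \<bullet> b) *\<^sub>R fderiv Z q b) has_derivative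
      (\<lambda>h. (Y p \<bullet> b) *\<^sub>R fderiv (\<lambda>q. fderiv Z q b) p h + (fderiv Y p h \<bullet> b) *\<^sub>R fderiv Z p b)) (at p)" for b
    using has_derivative_scaleR[OF has_derivative_inner_left[OF smooth_on_has_derivative(1)[OF Y p(2)]]
        smooth_on_has_derivative(2)[OF Z p(1)]] .
  hence "((\<lambda>q. \<Sum>b\<in>Basis. (Y q \<bullet> b) *\<^sub>R fderiv Z q b) has_derivative
      (\<lambda>h. \<Sum>b\<in>Basis. (Y p \<bullet> b) *\<^sub>R fderiv (\<lambda>q. fderiv Z q b) p h + (fderiv Y p h \<bullet> b) *\<^sub>R fderiv Z p b)) (at p)"
    by (rule has_derivative_sum)
  moreover have "(\<Sum>b\<in>Basis. (Y p \<bullet> b) *\<^sub>R fderiv (\<lambda>q. fderiv Z q b) p h + (fderiv Y p h \<bullet> b) *\<^sub>R fderiv Z p b)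
      = fderiv Z p (fderiv Y p h) + hessian Z p h (Y p)" for h
    using linear_eq_sum_Basis[OF linZ[OF p(1)], of "fderiv Y p h"]
    by (simp only: hessian_def sum.distrib add.commute)
  ultimately have d: "((\<lambda>q. \<Sum>b\<in>Basis. (Y q \<bullet> b) *\<^sub>R fderiv Z q b) has_derivative
      (\<lambda>h. fderiv Z p (fderiv Y p h) + hessian Z p h (Y p))) (at p)"
    by simp
  have "open (U \<inter> U')" using Z Y by (simp add: smooth_on_def open_Int)
  moreover have "(\<Sum>b\<in>Basis. (Y q \<bullet> b) *\<^sub>R fderiv Z q b) = fderiv Z q (Y q)" if "q \<in> U" for q
    using linear_eq_sum_Basis[OF linZ[OF that], of "Y q"] by simp
  ultimately show ?thesis
    using p by (intro has_derivative_transform_within_open[OF d, of "U \<inter> U'"]) auto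
qed

lemma hessian_symmetric:
  fixes Z :: "'a::euclidean_space \<Rightarrow> 'b::euclidean_space"
  assumes Z: "smooth_on U Z" and p: "p \<in> U"
  shows "hessian Z p h y = hessian Z p y h"
proof -
  define H where "H = (\<lambda>b. fderiv (\<lambda>q. fderiv Z q b) p)"
  have linH: "linear (H b)" for b
    unfolding H_def using has_derivative_linear[OF smooth_on_has_derivative(2)[OF Z p]] .
  have "open U" using Z by (simp add: smooth_on_def)
  hence sym: "H u w = H w u" for u w
    unfolding H_def
    by (rule second_derivative_symmetric[OF _ p, of Z "fderiv Z"])
       (use smooth_on_has_derivative[OF Z] smooth_on_continuous_second_derivative[OF Z] in auto)
  have expand: "hessian Z p h y = (\<Sum>b\<in>Basis. \<Sum>b'\<in>Basis. ((y \<bullet> b) * (h \<bullet> b')) *\<^sub>R H b b')" for h y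
  proof -
    have "hessian Z p h y = (\<Sum>b\<in>Basis. (y \<bullet> b) *\<^sub>R H b h)" unfolding hessian_def H_def ..
    also have "\<dots> = (\<Sum>b\<in>Basis. (y \<bullet> b) *\<^sub>R (\<Sum>b'\<in>Basis. (h \<bullet> b') *\<^sub>R H b b'))"
      by (simp only: linear_eq_sum_Basis[OF linH, of _ h, symmetric])
    finally show ?thesis by (simp only: scaleR_sum_right scaleR_scaleR)
  qed
  have "hessian Z p h y = (\<Sum>b'\<in>Basis. \<Sum>b\<in>Basis. ((y \<bullet> b) * (h \<bullet> b')) *\<^sub>R H b b')"
    unfolding expand by (rule sum.swap)
  also have "\<dots> = (\<Sum>b'\<in>Basis. \<Sum>b\<in>Basis. ((h \<bullet> b') * (y \<bullet> b)) *\<^sub>R H b' b)"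
    by (simp only: sym mult.commute)
  finally show ?thesis unfolding expand .
qed

section \<open>The h-sphere\<close>

definition norden_pair :: "('n::finite) pt \<Rightarrow> 'n pt \<Rightarrow> real \<times> real" where
  "norden_pair x y = (gN x y, gN (Jop x) y)"

lemma bounded_bilinear_norden_pair: "bounded_bilinear norden_pair"
  by (subst bilinear_conv_bounded_bilinear[symmetric], unfold bilinear_def)
     (intro conjI allI linearI; simp add: norden_pair_def)

locale h_sphere =
  fixes z0 :: "('n::finite) pt" and a b :: real
  assumes ab: "(a, b) \<noteq> (0, 0)"
begin

definition "M = hsphere z0 a b"

definition "sq_ab = a\<^sup>2 + b\<^sup>2"

definition "T q = {v. gN (q - z0) v = 0 \<and> gN (Jop (q - z0)) v = 0}"

definition "proj_N q w =
  ((a * gN w (q - z0) + b * gN w (Jop (q - z0))) / sq_ab) *\<^sub>R (q - z0)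
  + ((b * gN w (q - z0) - a * gN w (Jop (q - z0))) / sq_ab) *\<^sub>R Jop (q - z0)"

definition "proj_T q w = w - proj_N q w"

text \<open>The \<open>g\<close>-dual basis of \<open>q - z\<^sub>0, J (q - z\<^sub>0)\<close> in the normal plane; \<open>-dual_W q\<close> is the mean
  curvature vector.\<close>
definition "dual_W q = (a / sq_ab) *\<^sub>R (q - z0) + (b / sq_ab) *\<^sub>R Jop (q - z0)"

definition "dual_JW q = (b / sq_ab) *\<^sub>R (q - z0) - (a / sq_ab) *\<^sub>R Jop (q - z0)"

lemma sq_ab_nonzero: "sq_ab \<noteq> 0"
  using ab by (simp add: sq_ab_def sum_power2_eq_zero_iff)

lemma mem_M_iff: "q \<in> M \<longleftrightarrow> gN (q - z0) (q - z0) = a \<and> gN (Jop (q - z0)) (q - z0) = b"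
  by (simp add: M_def hsphere_def gT_def)

lemma gram_W:
  assumes "q \<in> M"
  shows "gN (q - z0) (q - z0) = a" "gN (Jop (q - z0)) (q - z0) = b"
    "gN (q - z0) (Jop (q - z0)) = b" "gN (Jop (q - z0)) (Jop (q - z0)) = - a"
  using assms gN_Jop_swap[of "q - z0" "q - z0"] by (auto simp: mem_M_iff)

lemma proj_N_eq_dual: "proj_N q w = gN w (q - z0) *\<^sub>R dual_W q + gN w (Jop (q - z0)) *\<^sub>R dual_JW q"
  by (simp add: proj_N_def dual_W_def dual_JW_def add_divide_distrib diff_divide_distrib algebra_simps)

lemma Jop_dual_W: "Jop (dual_W p) = - dual_JW p"
  by (simp add: dual_W_def dual_JW_def Jop_diff algebra_simps)

lemma proj_N_normal_components:
  assumes "q \<in> M"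
  shows "gN (proj_N q w) (q - z0) = gN w (q - z0)"
    and "gN (proj_N q w) (Jop (q - z0)) = gN w (Jop (q - z0))"
  using sq_ab_nonzero
  by (simp_all add: proj_N_def gram_W[OF assms] divide_simps)
     (simp_all add: sq_ab_def algebra_simps power2_eq_square)

lemma proj_T_in_T: assumes "q \<in> M" shows "proj_T q w \<in> T q"
proof -
  have "gN (proj_T q w) (q - z0) = 0" "gN (proj_T q w) (Jop (q - z0)) = 0"
    unfolding proj_T_def by (simp_all only: gN_diff_left proj_N_normal_components[OF assms] diff_self)
  thus ?thesis unfolding T_def using gN_commute[of "proj_T q w"] by simp
qed

lemma gN_proj_N_T: "v \<in> T q \<Longrightarrow> gN (proj_N q w) v = 0"
  by (simp add: proj_N_def T_def gN_commute)

lemma proj_N_T: "v \<in> T q \<Longrightarrow> proj_N q v = 0"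
  by (simp add: proj_N_def T_def gN_commute)

lemma proj_T_T: "v \<in> T q \<Longrightarrow> proj_T q v = v"
  by (simp add: proj_T_def proj_N_T)

lemma linear_proj_N: "linear (proj_N q)"
  by (rule linearI) (simp_all add: proj_N_def algebra_simps add_divide_distrib diff_divide_distrib)

lemma proj_T_add: "proj_T q (u + v) = proj_T q u + proj_T q v"
  using linear_add[OF linear_proj_N] by (simp add: proj_T_def)

lemma proj_T_diff: "proj_T q (u - v) = proj_T q u - proj_T q v"
  using linear_diff[OF linear_proj_N] by (simp add: proj_T_def)

lemma proj_T_scaleR: "proj_T q (c *\<^sub>R u) = c *\<^sub>R proj_T q u"
  using linear_scale[OF linear_proj_N] by (simp add: proj_T_def scaleR_diff_right)

lemma proj_T_W:
  assumes "q \<in> M"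
  shows "proj_T q (q - z0) = 0" "proj_T q (Jop (q - z0)) = 0"
proof -
  have "proj_N q (q - z0) = ((a * a + b * b) / sq_ab) *\<^sub>R (q - z0) + ((b * a - a * b) / sq_ab) *\<^sub>R Jop (q - z0)"
    "proj_N q (Jop (q - z0)) = ((a * b + b * (- a)) / sq_ab) *\<^sub>R (q - z0) + ((b * b - a * (- a)) / sq_ab) *\<^sub>R Jop (q - z0)"
    unfolding proj_N_def gram_W[OF assms] by simp_all
  thus "proj_T q (q - z0) = 0" "proj_T q (Jop (q - z0)) = 0"
    using sq_ab_nonzero by (auto simp: proj_T_def sq_ab_def power2_eq_square add.commute)
qed

lemma Jop_T: "v \<in> T q \<Longrightarrow> Jop v \<in> T q"
  using gN_Jop_swap[of "q - z0" v] by (simp add: T_def)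

lemma Jop_image_T: "Jop ` T q = T q"
proof
  show "Jop ` T q \<subseteq> T q" using Jop_T by blast
  show "T q \<subseteq> Jop ` T q"
  proof
    fix v assume "v \<in> T q"
    hence "- Jop v \<in> T q" using Jop_T by (simp add: T_def)
    thus "v \<in> Jop ` T q" by (metis Jop_Jop Jop_minus image_eqI minus_minus)
  qed
qed

lemma subspace_T: "subspace (T q)"
  unfolding subspace_def T_def by simp

lemma nondeg_T:
  assumes "q \<in> M"
  shows "nondeg (T q)"
  unfolding nondeg_def
proof (intro ballI impI)
  fix v assume v: "v \<in> T q" and h: "\<forall>w\<in>T q. gN v w = 0"
  have "gN v w = gN v (proj_T q w) + gN v (proj_N q w)" for w
    by (simp add: proj_T_def gN_diff_right)
  also have "gN v (proj_T q w) + gN v (proj_N q w) = 0" for w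
    using h proj_T_in_T[OF assms] gN_proj_N_T[OF v] gN_commute[of v] by simp
  finally show "v = 0" by (rule gN_nondegenerate)
qed

section \<open>Tangent spaces and the submanifold structure\<close>

lemma tangent_space_subset_T:
  assumes v: "v \<in> tangent_space M q"
  shows "v \<in> T q"
proof -
  have fd: "((\<lambda>x. x - z0) has_derivative (\<lambda>h. h)) (at q within M)"
    by (auto intro!: derivative_eq_intros)
  have j: "((\<lambda>x. Jop (x - z0)) has_derivative Jop) (at q within M)"
    using bounded_linear.has_derivative[OF bounded_linear_Jop fd] by simp
  have "gN (q - z0) v + gN v (q - z0) = 0"
    by (rule has_derivative_tangent_const[OF bounded_bilinear.FDERIV[OF bounded_bilinear_gN fd fd] _ v, of a])
       (simp add: mem_M_iff)
  moreover have "gN (Jop (q - z0)) v + gN (Jop v) (q - z0) = 0"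
    by (rule has_derivative_tangent_const[OF bounded_bilinear.FDERIV[OF bounded_bilinear_gN j fd] _ v, of b])
       (simp add: mem_M_iff)
  ultimately show ?thesis
    by (simp add: T_def gN_commute[of v] gN_Jop_swap gN_commute[of "Jop v"])
qed

text \<open>Multiplying \<open>q - z\<^sub>0\<close> by a complex number \<open>\<mu>\<close> (i.e. by \<open>Re \<mu> - Im \<mu> J\<close>) scales the
  complex quantity \<open>g(W,W) + i g(JW,W)\<close> by \<open>\<mu>\<^sup>2\<close>.\<close>
lemma rotated_point_in_M:
  assumes qM: "q \<in> M" and v: "v \<in> T q"
    and mu: "\<mu>\<^sup>2 * Complex a b = Complex a b - (complex_of_real s)\<^sup>2 * Complex (gN v v) (gN (Jop v) v)"
  shows "z0 + (Re \<mu> *\<^sub>R (q - z0) - Im \<mu> *\<^sub>R Jop (q - z0) + s *\<^sub>R v) \<in> M"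
proof -
  define W where "W = q - z0"
  define \<alpha> where "\<alpha> = Re \<mu>"
  define \<beta> where "\<beta> = Im \<mu>"
  have e1: "(\<alpha>\<^sup>2 - \<beta>\<^sup>2) * a - 2 * \<alpha> * \<beta> * b = a - s\<^sup>2 * gN v v"
    using arg_cong[OF mu, of Re]
    by (simp add: \<alpha>_def \<beta>_def Re_power2 Im_power2 power2_eq_square) (simp add: algebra_simps)
  have e2: "(\<alpha>\<^sup>2 - \<beta>\<^sup>2) * b + 2 * \<alpha> * \<beta> * a = b - s\<^sup>2 * gN (Jop v) v"
    using arg_cong[OF mu, of Im]
    by (simp add: \<alpha>_def \<beta>_def Re_power2 Im_power2 power2_eq_square) (simp add: algebra_simps)
  note WW = gram_W[OF qM, folded W_def]
  have vW: "gN v W = 0" "gN v (Jop W) = 0" "gN W v = 0" "gN (Jop W) v = 0"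
    "gN (Jop v) W = 0" "gN W (Jop v) = 0" "gN (Jop v) (Jop W) = 0" "gN (Jop W) (Jop v) = 0"
    using v gN_commute[of v] gN_Jop_swap[of v W] gN_Jop_swap[of W v] by (auto simp: T_def W_def)
  have "gN (\<alpha> *\<^sub>R W - \<beta> *\<^sub>R Jop W + s *\<^sub>R v) (\<alpha> *\<^sub>R W - \<beta> *\<^sub>R Jop W + s *\<^sub>R v) = a"
    using e1 by (simp add: gN_diff_left gN_diff_right WW vW) (simp add: power2_eq_square algebra_simps)
  moreover have "gN (Jop (\<alpha> *\<^sub>R W - \<beta> *\<^sub>R Jop W + s *\<^sub>R v)) (\<alpha> *\<^sub>R W - \<beta> *\<^sub>R Jop W + s *\<^sub>R v) = b"
    using e2 gN_commute[of v "Jop v"]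
    by (simp add: gN_diff_left gN_diff_right Jop_diff WW vW) (simp add: power2_eq_square algebra_simps)
  ultimately show ?thesis by (simp add: mem_M_iff W_def \<alpha>_def \<beta>_def)
qed

lemma T_subset_tangent_space:
  assumes qM: "q \<in> M" and v: "v \<in> T q"
  shows "v \<in> tangent_space M q"
proof -
  define cab where "cab = Complex a b"
  define cv where "cv = Complex (gN v v) (gN (Jop v) v)"
  define h where "h = (\<lambda>z. csqrt (1 - z\<^sup>2 * (cv / cab)))"
  define \<gamma> where "\<gamma> = (\<lambda>t. z0 + (Re (h (of_real t)) *\<^sub>R (q - z0) - Im (h (of_real t)) *\<^sub>R Jop (q - z0) + t *\<^sub>R v))"
  have "cab \<noteq> 0" using ab by (auto simp: cab_def complex_eq_iff)
  hence "(h (of_real t))\<^sup>2 * cab = cab - (complex_of_real t)\<^sup>2 * cv" for t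
    by (simp add: h_def algebra_simps)
  hence mem: "\<gamma> t \<in> M" for t
    unfolding \<gamma>_def using rotated_point_in_M[OF qM v] by (simp add: cab_def cv_def)
  have "(h has_field_derivative 0) (at (of_real 0))"
    unfolding h_def by (rule derivative_eq_intros refl | simp add: nonpos_Reals_def)+
  hence "((\<lambda>t. h (of_real t)) has_vector_derivative 0) (at 0)"
    by (rule has_vector_derivative_real_field)
  hence "(\<gamma> has_vector_derivative (0 + ((Re (h (of_real 0)) *\<^sub>R 0 + Re 0 *\<^sub>R (q - z0))
        - (Im (h (of_real 0)) *\<^sub>R 0 + Im 0 *\<^sub>R Jop (q - z0)) + (0 *\<^sub>R 0 + 1 *\<^sub>R v)))) (at 0)"
    unfolding \<gamma>_def by (intro derivative_intros has_field_derivative_Re has_field_derivative_Im)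
  moreover have "\<gamma> 0 = q" by (simp add: \<gamma>_def h_def)
  ultimately show ?thesis unfolding tangent_space_def using mem by auto
qed

lemma tangent_space_eq_T: "q \<in> M \<Longrightarrow> tangent_space M q = T q"
  using tangent_space_subset_T T_subset_tangent_space by blast

definition "defining_map x = norden_pair (x - z0) (x - z0) - (a, b)"

lemma has_derivative_defining_map:
  "(defining_map has_derivative (\<lambda>h. norden_pair (q - z0) h + norden_pair h (q - z0))) (at q)"
  unfolding defining_map_def
  by (auto intro!: derivative_eq_intros bounded_bilinear.FDERIV[OF bounded_bilinear_norden_pair])

lemma surj_derivative_defining_map:
  assumes qM: "q \<in> M"
  shows "surj (frechet_derivative defining_map (at q))"
  unfolding surj_def frechet_derivative_at[OF has_derivative_defining_map, symmetric]
proof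
  fix y :: "real \<times> real"
  obtain s t where y: "y = (s, t)" by (cases y)
  define W where "W = q - z0"
  note WW = gram_W[OF qM, folded W_def]
  define h where "h = ((a * s + b * t) / (2 * sq_ab)) *\<^sub>R W + ((b * s - a * t) / (2 * sq_ab)) *\<^sub>R Jop W"
  have "gN W h + gN h W = s"
    using sq_ab_nonzero by (simp add: h_def WW gN_commute[of W "Jop W"] field_simps)
      (simp add: sq_ab_def algebra_simps power2_eq_square)
  moreover have "gN (Jop W) h + gN (Jop h) W = t"
    using sq_ab_nonzero by (simp add: h_def WW gN_commute[of W "Jop W"] gN_diff_left field_simps)
      (simp add: sq_ab_def algebra_simps power2_eq_square)
  ultimately have "y = norden_pair W h + norden_pair h W"
    by (simp add: norden_pair_def y)
  thus "\<exists>h. y = norden_pair (q - z0) h + norden_pair h (q - z0)"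
    unfolding W_def by blast
qed

lemma submanifold_M: "submanifold_codim2 M"
proof -
  have "defining_map = (\<lambda>x. norden_pair (x - z0) (x - z0) + (\<lambda>_. 0) (x - z0) + (- (a, b)))"
    by (auto simp: defining_map_def)
  hence "defining_map \<in> quadratic_maps"
    using quadratic_map_shift[OF bounded_bilinear_norden_pair bounded_linear_zero] by simp
  hence "smooth_on UNIV defining_map" by (rule smooth_on_quadratic_map)
  moreover have "defining_map q = 0 \<longleftrightarrow> q \<in> M" for q
    by (auto simp: defining_map_def norden_pair_def mem_M_iff zero_prod_def)
  hence "M = {q. defining_map q = 0}" by blast
  ultimately show ?thesis
    unfolding submanifold_codim2_def using surj_derivative_defining_map by blast
qed

lemma holomorphic_hypersurface_M: "holomorphic_hypersurface M"
  unfolding holomorphic_hypersurface_def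
  using submanifold_M tangent_space_eq_T Jop_image_T nondeg_T by auto

section \<open>The second fundamental form\<close>

lemma tan_proj_eq_proj_T:
  assumes q: "q \<in> M"
  shows "tan_proj M q w = proj_T q w"
  unfolding tan_proj_def tangent_space_eq_T[OF q]
proof (rule the1_equality)
  show proj: "proj_T q w \<in> T q \<and> (\<forall>v\<in>T q. gN (w - proj_T q w) v = 0)"
    using proj_T_in_T[OF q] gN_proj_N_T by (simp add: proj_T_def)
  show "\<exists>!u. u \<in> T q \<and> (\<forall>v\<in>T q. gN (w - u) v = 0)"
  proof (rule ex_ex1I)
    show "\<exists>u. u \<in> T q \<and> (\<forall>v\<in>T q. gN (w - u) v = 0)" using proj by blast
  next
    fix u1 u2 assume h1: "u1 \<in> T q \<and> (\<forall>v\<in>T q. gN (w - u1) v = 0)"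
      and h2: "u2 \<in> T q \<and> (\<forall>v\<in>T q. gN (w - u2) v = 0)"
    have "u1 - u2 \<in> T q" using h1 h2 subspace_T by (simp add: subspace_diff)
    moreover have "\<forall>v\<in>T q. gN (u1 - u2) v = 0"
      using h1 h2 by (auto simp: gN_diff_left)
    ultimately have "u1 - u2 = 0" using nondeg_T[OF q] unfolding nondeg_def by blast
    thus "u1 = u2" by simp
  qed
qed

lemma tangent_field_in_T: "tangent_field M X \<Longrightarrow> q \<in> M \<Longrightarrow> X q \<in> T q"
  using tangent_space_eq_T unfolding tangent_field_def by blast

lemma tangent_field_has_derivative:
  "tangent_field M X \<Longrightarrow> q \<in> M \<Longrightarrow> (X has_derivative fderiv X q) (at q)"
  unfolding tangent_field_def using smooth_on_has_derivative(1) by blast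

lemma dD_eq_fderiv:
  assumes "(f has_derivative D) (at q)" "q \<in> M" "v \<in> T q"
  shows "dD M f q v = D v"
  using dD_eq_derivative[OF has_derivative_at_withinI[OF assms(1)]] assms(2,3) tangent_space_eq_T by blast

text \<open>Differentiating \<open>g(Y, q - z\<^sub>0) = 0\<close> and \<open>g(Y, J(q - z\<^sub>0)) = 0\<close> along \<open>x\<close>.\<close>
lemma fderiv_tangent_field_normal_components:
  assumes Y: "tangent_field M Y" and q: "q \<in> M" and x: "x \<in> T q"
  shows "gN (fderiv Y q x) (q - z0) = - gN (Y q) x"
    and "gN (fderiv Y q x) (Jop (q - z0)) = - gN (Y q) (Jop x)"
proof -
  have dY: "(Y has_derivative fderiv Y q) (at q within M)"
    using has_derivative_at_withinI[OF tangent_field_has_derivative[OF Y q]] .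
  have fd: "((\<lambda>x. x - z0) has_derivative (\<lambda>h. h)) (at q within M)"
    by (auto intro!: derivative_eq_intros)
  have j: "((\<lambda>x. Jop (x - z0)) has_derivative Jop) (at q within M)"
    using bounded_linear.has_derivative[OF bounded_linear_Jop fd] by simp
  have xt: "x \<in> tangent_space M q" using x tangent_space_eq_T[OF q] by simp
  have YT: "Y q' \<in> T q'" if "q' \<in> M" for q'
    using tangent_field_in_T[OF Y that] .
  have "gN (Y q) x + gN (fderiv Y q x) (q - z0) = 0"
    by (rule has_derivative_tangent_const[OF bounded_bilinear.FDERIV[OF bounded_bilinear_gN dY fd] _ xt, of 0])
       (use YT in \<open>auto simp: T_def gN_commute\<close>)
  thus "gN (fderiv Y q x) (q - z0) = - gN (Y q) x" by simp
  have "gN (Y q) (Jop x) + gN (fderiv Y q x) (Jop (q - z0)) = 0"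
    by (rule has_derivative_tangent_const[OF bounded_bilinear.FDERIV[OF bounded_bilinear_gN dY j] _ xt, of 0])
       (use YT in \<open>auto simp: T_def gN_commute\<close>)
  thus "gN (fderiv Y q x) (Jop (q - z0)) = - gN (Y q) (Jop x)" by simp
qed

lemma flatD_eq_fderiv:
  "tangent_field M X \<Longrightarrow> tangent_field M Y \<Longrightarrow> q \<in> M \<Longrightarrow> flatD M X Y q = fderiv Y q (X q)"
  unfolding flatD_def using dD_eq_fderiv tangent_field_has_derivative tangent_field_in_T by blast

lemma nabla_eq_proj_T:
  "tangent_field M X \<Longrightarrow> tangent_field M Y \<Longrightarrow> q \<in> M \<Longrightarrow> nabla M X Y q = proj_T q (fderiv Y q (X q))"
  unfolding nabla_def by (simp add: flatD_eq_fderiv tan_proj_eq_proj_T)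

lemma tangent_field_extension:
  assumes p: "p \<in> M" and v: "v \<in> T p"
  shows "tangent_field M (\<lambda>q. proj_T q v)"
proof -
  define Q :: "'n pt \<Rightarrow> 'n pt \<Rightarrow> 'n pt" where "Q = (\<lambda>x y. - (((a * gN v x + b * gN v (Jop x)) / sq_ab) *\<^sub>R y
    + ((b * gN v x - a * gN v (Jop x)) / sq_ab) *\<^sub>R Jop y))"
  have "bounded_bilinear Q"
    by (subst bilinear_conv_bounded_bilinear[symmetric], unfold bilinear_def)
       (intro conjI allI linearI; simp add: Q_def algebra_simps add_divide_distrib diff_divide_distrib)
  moreover have "(\<lambda>q. proj_T q v) = (\<lambda>q. Q (q - z0) (q - z0) + (\<lambda>_. 0) (q - z0) + v)"
    by (rule ext) (simp add: proj_T_def proj_N_def Q_def gN_commute[of v])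
  ultimately have "(\<lambda>q. proj_T q v) \<in> quadratic_maps"
    using quadratic_map_shift[OF _ bounded_linear_zero] by simp
  hence "smooth_on UNIV (\<lambda>q. proj_T q v)" by (rule smooth_on_quadratic_map)
  thus ?thesis using proj_T_in_T tangent_space_eq_T unfolding tangent_field_def by blast
qed

lemma ext_field:
  assumes p: "p \<in> M" and v: "v \<in> T p"
  shows "tangent_field M (ext_field M p v)" "ext_field M p v p = v"
proof -
  have "tangent_field M (ext_field M p v) \<and> ext_field M p v p = v"
    unfolding ext_field_def
    by (rule someI[of _ "\<lambda>q. proj_T q v"]) (simp add: tangent_field_extension[OF p v] proj_T_T[OF v])
  thus "tangent_field M (ext_field M p v)" "ext_field M p v p = v" by auto
qed

lemma sigma_eq:
  assumes p: "p \<in> M" and x: "x \<in> T p" and y: "y \<in> T p"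
  shows "sigma M p x y = (- gN y x) *\<^sub>R dual_W p + (- gN y (Jop x)) *\<^sub>R dual_JW p"
proof -
  let ?X = "ext_field M p x" and ?Y = "ext_field M p y"
  have "sigma M p x y = proj_N p (fderiv ?Y p x)"
    using ext_field[OF p x] ext_field[OF p y]
    by (simp add: sigma_def flatD_eq_fderiv[OF _ _ p] nabla_eq_proj_T[OF _ _ p] proj_T_def)
  thus ?thesis
    using fderiv_tangent_field_normal_components[OF ext_field(1)[OF p y] p x] ext_field(2)[OF p y]
    by (simp add: proj_N_eq_dual)
qed

section \<open>The mean curvature vector\<close>

lemma proj_T_eq_sum_basis:
  assumes p: "p \<in> M" and es: "g_orthonormal_basis (T p) es"
  shows "(\<Sum>e\<in>set es. (gN e e * gN u e) *\<^sub>R e) = proj_T p u"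
proof -
  define E where "E = set es"
  define s where "s = (\<Sum>e\<in>E. (gN e e * gN u e) *\<^sub>R e)"
  have spE: "span E = T p" using es by (simp add: E_def g_orthonormal_basis_def)
  have sT: "s \<in> T p" unfolding s_def spE[symmetric] by (intro span_sum span_scale span_base)
  have orth: "gN (u - s) e' = 0" if e': "e' \<in> E" for e'
  proof -
    have "gN s e' = (\<Sum>e\<in>E. gN e e * gN u e * gN e e')"
      by (simp add: s_def gN_sum_left)
    also have "\<dots> = gN e' e' * gN u e' * gN e' e'"
      using g_orthonormal_basis_orthogonal[OF es] e'
      by (subst sum.remove[of E e']) (auto simp: E_def intro!: sum.neutral)
    also have "\<dots> = gN u e'"
      using g_orthonormal_basis_sign_square[OF es] e' by (simp add: E_def algebra_simps)
    finally show ?thesis by (simp add: gN_diff_left)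
  qed
  have "subspace {v. gN (u - s) v = 0}" unfolding subspace_def by simp
  hence orthT: "gN (u - s) v = 0" if "v \<in> T p" for v
    using span_minimal[of E "{v. gN (u - s) v = 0}"] orth that spE by blast
  have "s - proj_T p u \<in> T p" using sT proj_T_in_T[OF p] subspace_T by (simp add: subspace_diff)
  moreover have "gN (s - proj_T p u) v = 0" if "v \<in> T p" for v
    using gN_proj_N_T[OF that] orthT[OF that]
    by (simp add: proj_T_def gN_diff_left algebra_simps)
  ultimately have "s - proj_T p u = 0" using nondeg_T[OF p] unfolding nondeg_def by blast
  thus ?thesis by (simp add: s_def E_def)
qed

lemma trace_T_selfadjoint:
  assumes p: "p \<in> M" and es: "g_orthonormal_basis (T p) es"
    and L: "\<And>x y. gN (L x) y = gN x (L y)"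
  shows "(\<Sum>e\<in>set es. gN e e * gN (L e) e) =
         (\<Sum>s\<in>Basis. gN s s * gN (L s) s) - (\<Sum>s\<in>Basis. gN s s * gN (proj_N p (L s)) s)"
proof -
  have "(\<Sum>e\<in>set es. gN e e * gN (L e) e)
      = (\<Sum>e\<in>set es. gN e e * (\<Sum>s\<in>Basis. gN s s * gN (L e) s * gN s e))"
    by (simp only: gN_Basis_expansion)
  also have "\<dots> = (\<Sum>e\<in>set es. \<Sum>s\<in>Basis. gN s s * (gN e e * gN (L s) e * gN e s))"
  proof (rule sum.cong[OF refl])
    fix e
    have "gN (L e) s * gN s e = gN (L s) e * gN e s" for s by (metis L gN_commute)
    thus "gN e e * (\<Sum>s\<in>Basis. gN s s * gN (L e) s * gN s e)
        = (\<Sum>s\<in>Basis. gN s s * (gN e e * gN (L s) e * gN e s))"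
      by (simp add: sum_distrib_left algebra_simps)
  qed
  also have "\<dots> = (\<Sum>s\<in>Basis. gN s s * gN (proj_T p (L s)) s)"
    by (subst sum.swap)
       (simp add: sum_distrib_left[symmetric] proj_T_eq_sum_basis[OF p es, symmetric] gN_sum_left)
  also have "\<dots> = (\<Sum>s\<in>Basis. gN s s * gN (L s) s) - (\<Sum>s\<in>Basis. gN s s * gN (proj_N p (L s)) s)"
    by (simp add: proj_T_def gN_diff_left algebra_simps sum_subtractf)
  finally show ?thesis .
qed

lemma trace_Basis_proj_N:
  assumes L: "\<And>x y. gN (L x) y = gN x (L y)"
  shows "(\<Sum>s\<in>(Basis::'n pt set). gN s s * gN (proj_N p (L s)) s) =
     (a * gN (p - z0) (L (p - z0)) + b * gN (p - z0) (L (Jop (p - z0)))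
      + b * gN (Jop (p - z0)) (L (p - z0)) - a * gN (Jop (p - z0)) (L (Jop (p - z0)))) / sq_ab"
proof -
  define W where "W = p - z0"
  have expand: "(\<Sum>s\<in>(Basis::'n pt set). gN s s * gN (L s) X * gN Y s) = gN Y (L X)" for X Y
    using gN_Basis_expansion[of Y "L X"] by (simp add: L algebra_simps)
  have "gN s s * gN (proj_N p (L s)) s =
     (a / sq_ab) * (gN s s * gN (L s) W * gN W s) + (b / sq_ab) * (gN s s * gN (L s) (Jop W) * gN W s)
     + (b / sq_ab) * (gN s s * gN (L s) W * gN (Jop W) s)
     - (a / sq_ab) * (gN s s * gN (L s) (Jop W) * gN (Jop W) s)" for s
    by (simp only: proj_N_def W_def gN_add_left gN_scaleR_left) (simp add: divide_simps algebra_simps)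
  thus ?thesis
    by (simp only: sum.distrib sum_subtractf sum_distrib_left[symmetric] expand)
       (simp add: W_def add_divide_distrib diff_divide_distrib)
qed

lemma trace_T_gN:
  assumes p: "p \<in> M" and es: "g_orthonormal_basis (T p) es"
  shows "(\<Sum>e\<in>set es. gN e e * gN e e) = 2 * real CARD('n) - 2"
proof -
  have "(\<Sum>s\<in>(Basis::'n pt set). gN s s * gN s s) = (\<Sum>s\<in>(Basis::'n pt set). 1)"
    by (intro sum.cong refl gN_Basis_sign_square)
  hence "(\<Sum>s\<in>(Basis::'n pt set). gN s s * gN s s) = 2 * real CARD('n)"
    using card_Basis_pt by simp
  moreover have "(\<Sum>s\<in>(Basis::'n pt set). gN s s * gN (proj_N p s) s) = 2"
    using trace_Basis_proj_N[of "\<lambda>x. x" p] sq_ab_nonzero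
    by (simp add: gram_W[OF p]) (simp add: sq_ab_def divide_simps power2_eq_square)
  ultimately show ?thesis using trace_T_selfadjoint[OF p es, of "\<lambda>x. x"] by simp
qed

lemma trace_T_gN_Jop:
  assumes p: "p \<in> M" and es: "g_orthonormal_basis (T p) es"
  shows "(\<Sum>e\<in>set es. gN e e * gN (Jop e) e) = 0"
proof -
  have "(\<Sum>s\<in>(Basis::'n pt set). gN s s * gN (Jop s) s) = 0"
    by (simp add: gN_Jop_Basis)
  moreover have "(\<Sum>s\<in>(Basis::'n pt set). gN s s * gN (proj_N p (Jop s)) s) = 0"
    using trace_Basis_proj_N[of Jop p, OF gN_Jop_swap]
    by (simp only: gram_W[OF p] Jop_Jop gN_minus_right) simp
  ultimately show ?thesis using trace_T_selfadjoint[OF p es, of Jop, OF gN_Jop_swap] by simp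
qed

lemma meanH_eq:
  assumes p: "p \<in> M" and n: "CARD('n) = n + 1" "n \<ge> 1"
  shows "meanH n M p = - dual_W p"
proof -
  define es where "es = (SOME es. g_orthonormal_basis (T p) es)"
  have "g_orthonormal_basis (T p) (SOME es. g_orthonormal_basis (T p) es)"
    using g_orthonormal_basis_exists[OF subspace_T nondeg_T[OF p]] by (rule someI_ex)
  hence es: "g_orthonormal_basis (T p) es" by (simp add: es_def)
  have eT: "e \<in> T p" if "e \<in> set es" for e
    using es that span_superset unfolding g_orthonormal_basis_def by blast
  have "trace_g (tangent_space M p) (sigma M p) = (\<Sum>e\<leftarrow>es. gN e e *\<^sub>R sigma M p e e)"
    by (simp add: trace_g_def tangent_space_eq_T[OF p] es_def[symmetric])
  also have "\<dots> = (\<Sum>e\<in>set es. gN e e *\<^sub>R sigma M p e e)"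
    using es by (simp add: g_orthonormal_basis_def sum_list_distinct_conv_sum_set)
  also have "\<dots> = (\<Sum>e\<in>set es. (- (gN e e * gN e e)) *\<^sub>R dual_W p + (- (gN e e * gN (Jop e) e)) *\<^sub>R dual_JW p)"
    by (rule sum.cong[OF refl]) (simp add: sigma_eq[OF p eT eT] gN_commute[of _ "Jop _"] algebra_simps)
  also have "\<dots> = (- (\<Sum>e\<in>set es. gN e e * gN e e)) *\<^sub>R dual_W p
      + (- (\<Sum>e\<in>set es. gN e e * gN (Jop e) e)) *\<^sub>R dual_JW p"
    by (simp add: sum.distrib scaleR_sum_left sum_negf sum_subtractf)
  also have "\<dots> = (- (2 * real n)) *\<^sub>R dual_W p"
    using trace_T_gN[OF p es] trace_T_gN_Jop[OF p es] n by simp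
  finally show ?thesis using n by (simp add: meanH_def)
qed

lemma h_umbilical_M:
  assumes "CARD('n) = n + 1" "n \<ge> 1"
  shows "h_umbilical n M"
  unfolding h_umbilical_def
proof (intro ballI)
  fix p x y assume p: "p \<in> M" and "x \<in> tangent_space M p" "y \<in> tangent_space M p"
  hence "x \<in> T p" "y \<in> T p" using tangent_space_eq_T[OF p] by auto
  thus "sigma M p x y = gN x y *\<^sub>R meanH n M p - gT x y *\<^sub>R Jop (meanH n M p)"
    by (simp add: sigma_eq p meanH_eq[OF p assms] gT_def Jop_dual_W gN_commute[of y] gN_Jop_swap)
qed

lemma norden_values_dual_W:
  assumes p: "p \<in> M"
  shows "gN (dual_W p) (dual_W p) = a / (a\<^sup>2 + b\<^sup>2)" "gT (dual_W p) (dual_W p) = - b / (a\<^sup>2 + b\<^sup>2)"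
proof -
  note WW = gram_W[OF p]
  have "gN (dual_W p) (dual_W p) = (a / sq_ab) * (a / sq_ab) * a + (a / sq_ab) * (b / sq_ab) * b
      + (b / sq_ab) * (a / sq_ab) * b + (b / sq_ab) * (b / sq_ab) * (- a)"
    unfolding dual_W_def
    by (simp only: gN_add_left gN_add_right gN_scaleR_left gN_scaleR_right WW) (simp add: algebra_simps)
  also have "\<dots> = a / (a\<^sup>2 + b\<^sup>2)" using sq_ab_nonzero
    by (simp add: divide_simps sq_ab_def) (simp add: algebra_simps power2_eq_square)
  finally show "gN (dual_W p) (dual_W p) = a / (a\<^sup>2 + b\<^sup>2)" .
  have "gT (dual_W p) (dual_W p) = (a / sq_ab) * (a / sq_ab) * b + (a / sq_ab) * (b / sq_ab) * (- a)
      + (b / sq_ab) * (a / sq_ab) * (- a) + (b / sq_ab) * (b / sq_ab) * (- b)"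
    unfolding dual_W_def gT_def
    by (simp only: Jop_add Jop_scaleR Jop_Jop gN_add_left gN_add_right gN_scaleR_left gN_scaleR_right
        gN_minus_left gN_minus_right WW) (simp add: algebra_simps)
  also have "\<dots> = - b / (a\<^sup>2 + b\<^sup>2)" using sq_ab_nonzero
    by (simp add: divide_simps sq_ab_def) (simp add: algebra_simps power2_eq_square)
  finally show "gT (dual_W p) (dual_W p) = - b / (a\<^sup>2 + b\<^sup>2)" .
qed

section \<open>The curvature tensor\<close>

text \<open>The Weingarten term: \<open>shape_term x y z\<close> is the tangential part of the derivative of
  \<open>\<sigma>(y,z)\<close> in direction \<open>x\<close>.\<close>
definition "shape_term u v z =
  (- ((a / sq_ab) * gN z v + (b / sq_ab) * gN z (Jop v))) *\<^sub>R u
  + (- ((b / sq_ab) * gN z v - (a / sq_ab) * gN z (Jop v))) *\<^sub>R Jop u"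

lemma has_derivative_proj_N_field:
  assumes dw: "(w has_derivative Dw) (at p)"
  shows "((\<lambda>q. proj_N q (w q)) has_derivative
    (\<lambda>h. (((a / sq_ab) * gN (w p) (p - z0) + (b / sq_ab) * gN (w p) (Jop (p - z0))) *\<^sub>R h
          + ((a / sq_ab) * (gN (w p) h + gN (Dw h) (p - z0))
             + (b / sq_ab) * (gN (w p) (Jop h) + gN (Dw h) (Jop (p - z0)))) *\<^sub>R (p - z0))
        + (((b / sq_ab) * gN (w p) (p - z0) - (a / sq_ab) * gN (w p) (Jop (p - z0))) *\<^sub>R Jop h
          + ((b / sq_ab) * (gN (w p) h + gN (Dw h) (p - z0))
             - (a / sq_ab) * (gN (w p) (Jop h) + gN (Dw h) (Jop (p - z0)))) *\<^sub>R Jop (p - z0)))) (at p)"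
proof -
  have "proj_N q u = ((a / sq_ab) * gN u (q - z0) + (b / sq_ab) * gN u (Jop (q - z0))) *\<^sub>R (q - z0)
      + ((b / sq_ab) * gN u (q - z0) - (a / sq_ab) * gN u (Jop (q - z0))) *\<^sub>R Jop (q - z0)" for q u
    by (simp add: proj_N_def add_divide_distrib diff_divide_distrib)
  moreover have fW: "((\<lambda>q. q - z0) has_derivative (\<lambda>h. h)) (at p)"
    by (auto intro!: derivative_eq_intros)
  moreover have fJ: "((\<lambda>q. Jop (q - z0)) has_derivative Jop) (at p)"
    using bounded_linear.has_derivative[OF bounded_linear_Jop fW] by simp
  moreover note gW = bounded_bilinear.FDERIV[OF bounded_bilinear_gN dw fW]
    and gJ = bounded_bilinear.FDERIV[OF bounded_bilinear_gN dw fJ]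
  ultimately show ?thesis
    by (simp only:)
       (intro has_derivative_add has_derivative_diff has_derivative_scaleR has_derivative_mult_right fW fJ gW gJ)
qed

lemma nabla_nabla_eq:
  assumes X: "tangent_field M X" and Y: "tangent_field M Y" and Z: "tangent_field M Z" and p: "p \<in> M"
  shows "nabla M X (nabla M Y Z) p
    = proj_T p (fderiv Z p (fderiv Y p (X p)) + hessian Z p (X p) (Y p)) - shape_term (X p) (Y p) (Z p)"
proof -
  obtain UY UZ where U: "M \<subseteq> UY" "smooth_on UY Y" "M \<subseteq> UZ" "smooth_on UZ Z"
    using X Y Z unfolding tangent_field_def by blast
  define w where "w = (\<lambda>q. fderiv Z q (Y q))"
  define Dw where "Dw = (\<lambda>h. fderiv Z p (fderiv Y p h) + hessian Z p h (Y p))"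
  have dw: "(w has_derivative Dw) (at p)"
    unfolding w_def Dw_def using has_derivative_fderiv_along_field U p by blast
  define W where "W = p - z0"
  define c1 where "c1 = (a / sq_ab) * gN (w p) W + (b / sq_ab) * gN (w p) (Jop W)"
  define c2 where "c2 = (b / sq_ab) * gN (w p) W - (a / sq_ab) * gN (w p) (Jop W)"
  define c1d where "c1d = (\<lambda>h. (a / sq_ab) * (gN (w p) h + gN (Dw h) W) + (b / sq_ab) * (gN (w p) (Jop h) + gN (Dw h) (Jop W)))"
  define c2d where "c2d = (\<lambda>h. (b / sq_ab) * (gN (w p) h + gN (Dw h) W) - (a / sq_ab) * (gN (w p) (Jop h) + gN (Dw h) (Jop W)))"
  define DN where "DN = (\<lambda>h. (c1 *\<^sub>R h + c1d h *\<^sub>R W) + (c2 *\<^sub>R Jop h + c2d h *\<^sub>R Jop W))"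
  have "((\<lambda>q. w q - proj_N q (w q)) has_derivative (\<lambda>h. Dw h - DN h)) (at p)"
    using has_derivative_diff[OF dw has_derivative_proj_N_field[OF dw]]
    unfolding DN_def c1_def c2_def c1d_def c2d_def W_def .
  hence "(nabla M Y Z has_derivative (\<lambda>h. Dw h - DN h)) (at p within M)"
    by (rule has_derivative_transform_within[OF has_derivative_at_withinI zero_less_one p])
       (simp add: nabla_eq_proj_T[OF Y Z] w_def proj_T_def)
  moreover have x: "X p \<in> T p" using tangent_field_in_T[OF X p] .
  moreover have "X p \<in> tangent_space M p" using x tangent_space_eq_T[OF p] by simp
  ultimately have "nabla M X (nabla M Y Z) p = proj_T p (Dw (X p) - DN (X p))"
    unfolding nabla_def[of M X "nabla M Y Z"] flatD_def tan_proj_eq_proj_T[OF p]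
    by (simp add: dD_eq_derivative)
  also have "\<dots> = proj_T p (Dw (X p)) - (c1 *\<^sub>R X p + c2 *\<^sub>R Jop (X p))"
    unfolding proj_T_diff DN_def using proj_T_W[OF p] proj_T_T[OF x] proj_T_T[OF Jop_T[OF x]]
    by (simp add: proj_T_add proj_T_scaleR W_def)
  also have "c1 *\<^sub>R X p + c2 *\<^sub>R Jop (X p) = shape_term (X p) (Y p) (Z p)"
    using fderiv_tangent_field_normal_components[OF Z p tangent_field_in_T[OF Y p]]
    by (simp add: shape_term_def c1_def c2_def w_def W_def algebra_simps)
  finally show ?thesis by (simp add: Dw_def)
qed

lemma lie_eq:
  assumes X: "tangent_field M X" and Y: "tangent_field M Y" and p: "p \<in> M"
  shows "lie M X Y p = fderiv Y p (X p) - fderiv X p (Y p)" "lie M X Y p \<in> T p"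
proof -
  show l: "lie M X Y p = fderiv Y p (X p) - fderiv X p (Y p)"
    unfolding lie_def using flatD_eq_fderiv X Y p by simp
  note k1 = fderiv_tangent_field_normal_components[OF Y p tangent_field_in_T[OF X p]]
  note k2 = fderiv_tangent_field_normal_components[OF X p tangent_field_in_T[OF Y p]]
  have s: "gN (Y p) (Jop (X p)) = gN (X p) (Jop (Y p))"
    by (metis gN_Jop_swap gN_commute)
  have "gN (lie M X Y p) (p - z0) = 0"
    unfolding l by (simp only: gN_diff_left k1 k2) (simp add: gN_commute[of "X p" "Y p"])
  moreover have "gN (lie M X Y p) (Jop (p - z0)) = 0"
    unfolding l by (simp only: gN_diff_left k1 k2 s diff_self)
  ultimately show "lie M X Y p \<in> T p"
    unfolding T_def using gN_commute[of "p - z0"] gN_commute[of "Jop (p - z0)"] by simp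
qed

text \<open>The Gauss equation; the second derivatives cancel by the symmetry of the Hessian.\<close>
lemma curvR_eq:
  assumes X: "tangent_field M X" and Y: "tangent_field M Y" and Z: "tangent_field M Z" and p: "p \<in> M"
  shows "curvR M X Y Z p = shape_term (Y p) (X p) (Z p) - shape_term (X p) (Y p) (Z p)"
proof -
  obtain UZ where UZ: "M \<subseteq> UZ" "smooth_on UZ Z" using Z unfolding tangent_field_def by blast
  have sym: "hessian Z p (X p) (Y p) = hessian Z p (Y p) (X p)"
    using hessian_symmetric[OF UZ(2)] UZ(1) p by blast
  have "linear (fderiv Z p)" using has_derivative_linear[OF tangent_field_has_derivative[OF Z p]] .
  hence "nabla M (lie M X Y) Z p = proj_T p (fderiv Z p (fderiv Y p (X p)) - fderiv Z p (fderiv X p (Y p)))"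
    unfolding nabla_def[of M "lie M X Y"] flatD_def tan_proj_eq_proj_T[OF p]
    using dD_eq_fderiv[OF tangent_field_has_derivative[OF Z p] p lie_eq(2)[OF X Y p]] lie_eq(1)[OF X Y p]
    by (simp add: linear_diff)
  thus ?thesis
    unfolding curvR_def nabla_nabla_eq[OF X Y Z p] nabla_nabla_eq[OF Y X Z p] sym
    by (simp add: proj_T_add proj_T_diff algebra_simps)
qed

lemma totally_real_sectional_curvatures:
  assumes p: "p \<in> M" and sub: "\<beta> \<subseteq> tangent_space M p" and dB: "dim \<beta> = 2" and nd: "nondeg \<beta>"
    and tr: "totally_real \<beta>" and x: "x \<in> \<beta>" and y: "y \<in> \<beta>" and sp: "span {x, y} = \<beta>"
  shows "Ksec M p x y = a / (a\<^sup>2 + b\<^sup>2) \<and> Ktsec M p x y = - b / (a\<^sup>2 + b\<^sup>2)"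
proof -
  have xT: "x \<in> T p" and yT: "y \<in> T p" using sub x y tangent_space_eq_T[OF p] by auto
  have t: "gN y (Jop x) = 0" "gN y (Jop y) = 0" "gN x (Jop x) = 0" "gN x (Jop y) = 0"
    using tr x y unfolding totally_real_def by blast+
  have t': "gN (Jop y) x = 0" "gN (Jop x) x = 0" "gN (Jop x) y = 0" "gN (Jop y) y = 0"
    using t gN_Jop_swap[of y x] gN_Jop_swap[of x x] gN_Jop_swap[of x y] gN_Jop_swap[of y y] by auto
  have R: "Rp M p x y y = shape_term y x y - shape_term x y y"
    using curvR_eq[OF ext_field(1)[OF p xT] ext_field(1)[OF p yT] ext_field(1)[OF p yT] p]
    by (simp add: Rp_def ext_field(2)[OF p xT] ext_field(2)[OF p yT])
  have "R4 M p x y y x = (a / sq_ab) * pi1 x y y x"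
    unfolding R4_def R shape_term_def pi1_def
    by (simp add: gN_diff_left t t' gN_commute[of x y])
       (simp add: algebra_simps power2_eq_square diff_divide_distrib add_divide_distrib)
  moreover have "Rt4 M p x y y x = (- b / sq_ab) * pi1 x y y x"
    unfolding Rt4_def R4_def R shape_term_def pi1_def
    by (simp add: gN_diff_left t t' gN_commute[of x y])
       (simp add: algebra_simps power2_eq_square diff_divide_distrib add_divide_distrib)
  ultimately show ?thesis
    using pi1_nonzero_if_nondeg[OF sp dB nd] unfolding Ksec_def Ktsec_def by (simp add: sq_ab_def)
qed

lemma const_totally_real_curv_M: "const_totally_real_curv M (a / (a\<^sup>2 + b\<^sup>2)) (- b / (a\<^sup>2 + b\<^sup>2))"
  unfolding const_totally_real_curv_def using totally_real_sectional_curvatures by blast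

end

theorem theorem3p1:
  fixes n :: nat and z0 :: "(real^'n) \<times> (real^'n)" and a b :: real
  assumes "CARD('n) = n + 1" and "n \<ge> 2" and "(a, b) \<noteq> (0, 0)"
  shows "holomorphic_hypersurface (hsphere z0 a b) \<and>
         h_umbilical n (hsphere z0 a b) \<and>
         const_totally_real_curv (hsphere z0 a b) (a / (a\<^sup>2 + b\<^sup>2)) (- b / (a\<^sup>2 + b\<^sup>2)) \<and>
         (\<forall>p\<in>hsphere z0 a b.
            gN (meanH n (hsphere z0 a b) p) (meanH n (hsphere z0 a b) p) = a / (a\<^sup>2 + b\<^sup>2) \<and>
            gT (meanH n (hsphere z0 a b) p) (meanH n (hsphere z0 a b) p) = - b / (a\<^sup>2 + b\<^sup>2))"
proof -
  interpret S: h_sphere z0 a b by unfold_locales (rule assms(3))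
  have n: "n \<ge> 1" using assms(2) by simp
  have "gN (meanH n S.M p) (meanH n S.M p) = a / (a\<^sup>2 + b\<^sup>2)"
    "gT (meanH n S.M p) (meanH n S.M p) = - b / (a\<^sup>2 + b\<^sup>2)" if "p \<in> S.M" for p
    using S.norden_values_dual_W[OF that] S.meanH_eq[OF that assms(1) n] by (simp_all add: gT_def)
  thus ?thesis
    using S.holomorphic_hypersurface_M S.h_umbilical_M[OF assms(1) n] S.const_totally_real_curv_M
    unfolding S.M_def by blast
qed

end
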